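(* Let $R$ be a principal ideal domain and $n\geq 2$. Let $J$ be the complex of representations of $(Q_{\mathfrak{A}_n},\rho_{\mathfrak{A}_n})$ with $J^{-1}=I_{H_1}\oplus I_{H_2}$, $J^0=\bigoplus_{i=1}^n I_{E_i}\oplus\bigoplus_{i=1}^n I_{P_i}$, $J^1=\bigoplus_{i=1}^n I_{P_i}$, zero elsewhere, with differential $J^{-1}\to J^0$ given by $\begin{pmatrix}\partial^0\\0\end{pmatrix}$ and $J^0\to J^1$ given by $(\partial^1\ \ 0)$, where $\partial^0:I_{H_1}\oplus I_{H_2}\to\bigoplus_i I_{E_i}$ has $E_i$-component $he_{1i}\oplus(-he_{2i})$, and $\partial^1:\bigoplus_j I_{E_j}\to\bigoplus_i I_{P_i}$ has $P_i$-component $e_{ii}$ on $I_{E_i}$, $-e_{(i+1)i}$ on $I_{E_{i+1}}$ and zero on all other summands (indices mod $n$). (This is a resolution of $W_1\oplus\dots\oplus W_n\oplus C[1]$, where $W_i$ has $R$ at $P_i$ and $0$ elsewhere and $C$ has $R$ at every vertex with identity maps.) Then $\operatorname{End} J$ is formal: there are a dg subalgebra $\mathcal{U}\subset\operatorname{End} J$ and a two-sided dg ideal $\mathcal{I}\subset\mathcal{U}$ giving a chain of quasi-isomorphisms of dg algebras $\operatorname{End} J\hookleftarrow\mathcal{U}\twoheadrightarrow\mathcal{U}/\mathcal{I}\hookleftarrow H(\mathcal{U}/\mathcal{I})$.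
   Context: $\mathfrak{A}_n$ ($n\geq 2$) is the stratification of $S^2$ into $n$ points $P_1,\dots,P_n$ in cyclic order on a great circle, the $n$ open arcs $E_1,\dots,E_n$ of that circle, where $E_i$ has endpoints $P_{i-1}$ and $P_i$ (indices mod $n$, so $E_1$ joins $P_n$ and $P_1$), and the two open hemispheres $H_1,H_2$. The quiver $(Q_{\mathfrak{A}_n},\rho_{\mathfrak{A}_n})$ has one vertex per stratum, an arrow $S\to T$ whenever $S\subsetneq\overline T$, and relations identifying all paths with the same endpoints; representations are by $R$-modules. For a stratum $S$, $I_S$ is the representation with $R$ at every vertex $T$ with $T\subset\overline S$ and $0$ elsewhere, identity maps on arrows between copies of $R$, zero otherwise. For $T\subset\overline S$ the canonical morphism $I_S\to I_T$ is the identity of $R$ wherever both have $R$ and zero elsewhere; $he_{ji}:I_{H_j}\to I_{E_i}$ and $e_{ik}:I_{E_i}\to I_{P_k}$ (for $k\in\{i-1,i\}$ mod $n$) denote these canonical morphisms. $\operatorname{End} J$ is the Hom complex of $J$ with its dg algebra structure; a dg algebra is formal if it is connected to its cohomology algebra (zero differential) by a finite chain of quasi-isomorphisms (more generally quasi-equivalences). *)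

theory Defs
  imports Main
begin

definition ideal_r :: "'r::idom set \<Rightarrow> bool" where
  "ideal_r I \<longleftrightarrow> 0 \<in> I \<and> (\<forall>a\<in>I. \<forall>b\<in>I. a + b \<in> I) \<and> (\<forall>a\<in>I. \<forall>r. r * a \<in> I)"

definition is_pid :: "'r::idom itself \<Rightarrow> bool" where
  "is_pid _ \<longleftrightarrow> (\<forall>I::'r set. ideal_r I \<longrightarrow> (\<exists>a. I = range (\<lambda>r. r * a)))"

text \<open>Points P 1..P n, arcs E 1..E n (E i joins P (i-1) and P i, indices mod n,
  E 1 joins P n and P 1), hemispheres H 1, H 2.\<close>

datatype stratum = P nat | E nat | H nat

definition strata :: "nat \<Rightarrow> stratum set" where
  "strata n = {P i | i. 1 \<le> i \<and> i \<le> n} \<union> {E i | i. 1 \<le> i \<and> i \<le> n} \<union> {H 1, H 2}"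

definition predc :: "nat \<Rightarrow> nat \<Rightarrow> nat" where
  "predc n i = (if i = 1 then n else i - 1)"

definition succc :: "nat \<Rightarrow> nat \<Rightarrow> nat" where
  "succc n i = (if i = n then 1 else i + 1)"

text \<open>in_cl n S T: S is contained in the closure of T.\<close>
definition in_cl :: "nat \<Rightarrow> stratum \<Rightarrow> stratum \<Rightarrow> bool" where
  "in_cl n S T \<longleftrightarrow> S \<in> strata n \<and> T \<in> strata n \<and>
     (S = T
      \<or> (\<exists>i k. S = P k \<and> T = E i \<and> (k = i \<or> k = predc n i))
      \<or> (\<exists>j. T = H j \<and> (\<exists>i. S = P i \<or> S = E i)))"

definition arrow :: "nat \<Rightarrow> stratum \<Rightarrow> stratum \<Rightarrow> bool" where
  "arrow n S T \<longleftrightarrow> in_cl n S T \<and> S \<noteq> T"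

text \<open>The value at vertex T of the direct sum of I_X over X in L: vectors indexed by the
  summand labels, with coordinate X allowed nonzero only if T lies in the closure of X
  (where I_X has R).\<close>
definition Isum :: "nat \<Rightarrow> stratum set \<Rightarrow> stratum \<Rightarrow> (stratum \<Rightarrow> 'r::idom) set" where
  "Isum n L T = {v. \<forall>X. v X \<noteq> 0 \<longrightarrow> X \<in> L \<and> in_cl n T X}"

text \<open>Structure map of such a direct sum along an arrow T \<rightarrow> T': identity on the copies of
  R present at both vertices, zero otherwise.\<close>
definition restr :: "nat \<Rightarrow> stratum \<Rightarrow> (stratum \<Rightarrow> 'r::idom) \<Rightarrow> (stratum \<Rightarrow> 'r)" where
  "restr n T' v = (\<lambda>X. if in_cl n T' X then v X else 0)"

text \<open>Morphism between direct sums given by a matrix c of coefficients times the canonical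
  morphisms I_X \<rightarrow> I_Y, at vertex T.\<close>
definition canmap :: "nat \<Rightarrow> (stratum \<Rightarrow> stratum \<Rightarrow> 'r::idom) \<Rightarrow> stratum
                       \<Rightarrow> (stratum \<Rightarrow> 'r) \<Rightarrow> (stratum \<Rightarrow> 'r)" where
  "canmap n c T v = (\<lambda>Y. if in_cl n T Y then (\<Sum>X\<in>strata n. c Y X * v X) else 0)"

definition summJ :: "nat \<Rightarrow> int \<Rightarrow> stratum set" where
  "summJ n k =
     (if k = -1 then {H 1, H 2}
      else if k = 0 then {E i | i. 1 \<le> i \<and> i \<le> n} \<union> {P i | i. 1 \<le> i \<and> i \<le> n}
      else if k = 1 then {P i | i. 1 \<le> i \<and> i \<le> n}
      else {})"

definition Jmod :: "nat \<Rightarrow> int \<Rightarrow> stratum \<Rightarrow> (stratum \<Rightarrow> 'r::idom) set" where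
  "Jmod n k T = Isum n (summJ n k) T"

definition cd0 :: "nat \<Rightarrow> stratum \<Rightarrow> stratum \<Rightarrow> 'r::idom" where
  "cd0 n Y X = (if (\<exists>i. 1 \<le> i \<and> i \<le> n \<and> Y = E i)
                then (if X = H 1 then 1 else if X = H 2 then -1 else 0) else 0)"

definition cd1 :: "nat \<Rightarrow> stratum \<Rightarrow> stratum \<Rightarrow> 'r::idom" where
  "cd1 n Y X = (if (\<exists>i. 1 \<le> i \<and> i \<le> n \<and> Y = P i)
                then (case Y of P i \<Rightarrow>
                        (if X = E i then 1 else 0) - (if X = E (succc n i) then 1 else 0)
                      | _ \<Rightarrow> 0)
                else 0)"

definition dJ :: "nat \<Rightarrow> int \<Rightarrow> stratum \<Rightarrow> (stratum \<Rightarrow> 'r::idom) \<Rightarrow> (stratum \<Rightarrow> 'r)" where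
  "dJ n k T v =
     (if v \<in> Jmod n k T then
        (if k = -1 then canmap n (cd0 n) T v
         else if k = 0 then canmap n (cd1 n) T v
         else (\<lambda>_. 0))
      else (\<lambda>_. 0))"

text \<open>An element f of degree p: for every k and vertex T a map J^k(T) \<rightarrow> J^{k+p}(T)
  (extended by 0 outside J^k(T)), R-linear, commuting with the structure maps.\<close>
type_synonym 'r endo = "int \<Rightarrow> stratum \<Rightarrow> (stratum \<Rightarrow> 'r) \<Rightarrow> (stratum \<Rightarrow> 'r)"

definition hom :: "nat \<Rightarrow> int \<Rightarrow> 'r::idom endo \<Rightarrow> bool" where
  "hom n p f \<longleftrightarrow> (\<forall>k T.
      (\<forall>v. v \<notin> Jmod n k T \<longrightarrow> f k T v = (\<lambda>_. 0))
    \<and> (\<forall>v\<in>Jmod n k T. f k T v \<in> Jmod n (k + p) T)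
    \<and> (\<forall>v\<in>Jmod n k T. \<forall>w\<in>Jmod n k T. f k T (\<lambda>X. v X + w X) = (\<lambda>Y. f k T v Y + f k T w Y))
    \<and> (\<forall>v\<in>Jmod n k T. \<forall>r. f k T (\<lambda>X. r * v X) = (\<lambda>Y. r * f k T v Y))
    \<and> (\<forall>T'. arrow n T T' \<longrightarrow> (\<forall>v\<in>Jmod n k T. restr n T' (f k T v) = f k T' (restr n T' v))))"

definition EndJ :: "nat \<Rightarrow> int \<Rightarrow> 'r::idom endo set" where
  "EndJ n p = {f. hom n p f}"

definition zeroE :: "'r::idom endo" where
  "zeroE = (\<lambda>k T v Y. 0)"

definition addE :: "'r::idom endo \<Rightarrow> 'r endo \<Rightarrow> 'r endo" where
  "addE f g = (\<lambda>k T v Y. f k T v Y + g k T v Y)"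

definition smulE :: "'r::idom \<Rightarrow> 'r endo \<Rightarrow> 'r endo" where
  "smulE r f = (\<lambda>k T v Y. r * f k T v Y)"

definition subE :: "'r::idom endo \<Rightarrow> 'r endo \<Rightarrow> 'r endo" where
  "subE f g = (\<lambda>k T v Y. f k T v Y - g k T v Y)"

definition compE :: "int \<Rightarrow> 'r::idom endo \<Rightarrow> 'r endo \<Rightarrow> 'r endo" where
  "compE p g f = (\<lambda>k T v. g (k + p) T (f k T v))"

definition idE :: "nat \<Rightarrow> 'r::idom endo" where
  "idE n = (\<lambda>k T v. if v \<in> Jmod n k T then v else (\<lambda>_. 0))"

definition dEnd :: "nat \<Rightarrow> int \<Rightarrow> 'r::idom endo \<Rightarrow> 'r endo" where
  "dEnd n p f = (\<lambda>k T v Y. dJ n (k + p) T (f k T v) Y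
                           - (if even p then 1 else -1) * f (k + 1) T (dJ n k T v) Y)"

definition submod :: "'r::idom endo set \<Rightarrow> bool" where
  "submod A \<longleftrightarrow> zeroE \<in> A \<and> (\<forall>f\<in>A. \<forall>g\<in>A. addE f g \<in> A) \<and> (\<forall>r. \<forall>f\<in>A. smulE r f \<in> A)"

definition dg_subalg :: "nat \<Rightarrow> (int \<Rightarrow> 'r::idom endo set) \<Rightarrow> (int \<Rightarrow> 'r endo set) \<Rightarrow> bool" where
  "dg_subalg n A B \<longleftrightarrow> idE n \<in> A 0 \<and>
     (\<forall>p. A p \<subseteq> B p \<and> submod (A p) \<and> dEnd n p ` A p \<subseteq> A (p + 1) \<and>
          (\<forall>q. \<forall>f\<in>A p. \<forall>g\<in>A q. compE p g f \<in> A (p + q)))"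

definition dg_ideal :: "nat \<Rightarrow> (int \<Rightarrow> 'r::idom endo set) \<Rightarrow> (int \<Rightarrow> 'r endo set) \<Rightarrow> bool" where
  "dg_ideal n I U \<longleftrightarrow>
     (\<forall>p. I p \<subseteq> U p \<and> submod (I p) \<and> dEnd n p ` I p \<subseteq> I (p + 1) \<and>
          (\<forall>q. \<forall>f\<in>U p. \<forall>g\<in>I q. compE p g f \<in> I (p + q) \<and> compE q f g \<in> I (p + q)))"

definition zeroG :: "int \<Rightarrow> 'r::idom endo set" where
  "zeroG = (\<lambda>p. {zeroE})"

text \<open>Cohomology of a quotient complex A/K (K \<subseteq> A subcomplexes of End J), described on
  representatives: cycles of A/K and the boundary relation of A/K.\<close>
definition qcycles :: "nat \<Rightarrow> (int \<Rightarrow> 'r::idom endo set) \<Rightarrow> (int \<Rightarrow> 'r endo set) \<Rightarrow> int \<Rightarrow> 'r endo set" where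
  "qcycles n A K p = {a \<in> A p. dEnd n p a \<in> K (p + 1)}"

definition qbdry :: "nat \<Rightarrow> (int \<Rightarrow> 'r::idom endo set) \<Rightarrow> (int \<Rightarrow> 'r endo set) \<Rightarrow> int \<Rightarrow> 'r endo \<Rightarrow> bool" where
  "qbdry n A K p a \<longleftrightarrow> (\<exists>b\<in>A (p - 1). \<exists>x\<in>K p. a = addE (dEnd n (p - 1) b) x)"

text \<open>The chain map A/K \<rightarrow> B/L induced by the inclusion (A \<subseteq> B, K \<subseteq> L) is a
  quasi-isomorphism: the induced map on cohomology is injective and surjective in every degree.\<close>
definition qis :: "nat \<Rightarrow> (int \<Rightarrow> 'r::idom endo set) \<Rightarrow> (int \<Rightarrow> 'r endo set)
                   \<Rightarrow> (int \<Rightarrow> 'r endo set) \<Rightarrow> (int \<Rightarrow> 'r endo set) \<Rightarrow> bool" where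
  "qis n A K B L \<longleftrightarrow> (\<forall>p.
      (\<forall>a\<in>qcycles n A K p. qbdry n B L p a \<longrightarrow> qbdry n A K p a)
    \<and> (\<forall>b\<in>qcycles n B L p. \<exists>a\<in>qcycles n A K p. qbdry n B L p (subE b a)))"

end

theory Submission
  imports Defs
begin

(* Every endomorphism of J of degree p is determined by its coefficient array: the entry at
   summands (Y, X) of the matrix relating I_X in J^k to I_Y in J^(k+p), which can be nonzero only
   if Y lies in the closure of X.  Composition, the differential of End J and the module
   operations become operations on arrays, so End J is an explicit complex of finite matrices.

   It then introduces the explicit graded pieces
     U  (degree 0: diagonal scalars; degree 1: maps out of I_{H_1}, plus the P-diagonal;
         degree 2: the maps I_{H_1} -> I_{P_i}),
     I  (the acyclic part of U in degrees 1 and 2) and V (a complement of the boundaries),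
   computes their multiplication table and differentials, and proves:
     I is acyclic, hence U -> U/I is a quasi-isomorphism;  V/I has zero differential and maps
     isomorphically onto H(U/I);  and every cycle of End J is cohomologous to one in U, while
     U-cycles bounding in End J already bound in U.
   The coefficient ring only needs to be an integral domain. *)

lemma finite_strata [simp]: "finite (strata n)"
proof -
  have "strata n = P ` {1..n} \<union> E ` {1..n} \<union> {H 1, H 2}"
    unfolding strata_def by auto
  thus ?thesis by simp
qed

lemma P_strata [simp]: "P a \<in> strata n \<longleftrightarrow> 1 \<le> a \<and> a \<le> n"
  and E_strata [simp]: "E a \<in> strata n \<longleftrightarrow> 1 \<le> a \<and> a \<le> n"
  and H_strata [simp]: "H j \<in> strata n \<longleftrightarrow> j = 1 \<or> j = 2"
  unfolding strata_def by auto

lemma P_summJ [simp]: "P a \<in> summJ n k \<longleftrightarrow> (k = 0 \<or> k = 1) \<and> 1 \<le> a \<and> a \<le> n"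
  and E_summJ [simp]: "E a \<in> summJ n k \<longleftrightarrow> k = 0 \<and> 1 \<le> a \<and> a \<le> n"
  and H_summJ [simp]: "H j \<in> summJ n k \<longleftrightarrow> k = -1 \<and> (j = 1 \<or> j = 2)"
  unfolding summJ_def by auto

lemma summJ_strata: "X \<in> summJ n k \<Longrightarrow> X \<in> strata n"
  by (cases X) auto

lemma in_cl_strata: "in_cl n S T \<Longrightarrow> S \<in> strata n \<and> T \<in> strata n"
  unfolding in_cl_def by auto

lemma succc_ge1 [simp]: "1 \<le> a \<Longrightarrow> Suc 0 \<le> succc n a"
  and succc_le [simp]: "1 \<le> a \<Longrightarrow> a \<le> n \<Longrightarrow> succc n a \<le> n"
  unfolding succc_def by auto

lemma succc_neq: "2 \<le> n \<Longrightarrow> 1 \<le> a \<Longrightarrow> a \<le> n \<Longrightarrow> succc n a \<noteq> a"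
  unfolding succc_def by auto

lemma in_cl_PP [simp]: "in_cl n (P a) (P b) \<longleftrightarrow> a = b \<and> 1 \<le> a \<and> a \<le> n"
  and in_cl_PE [simp]: "in_cl n (P a) (E b) \<longleftrightarrow>
        1 \<le> a \<and> a \<le> n \<and> 1 \<le> b \<and> b \<le> n \<and> (b = a \<or> b = succc n a)"
  and in_cl_PH [simp]: "in_cl n (P a) (H j) \<longleftrightarrow> 1 \<le> a \<and> a \<le> n \<and> (j = 1 \<or> j = 2)"
  and in_cl_EP [simp]: "in_cl n (E a) (P b) \<longleftrightarrow> False"
  and in_cl_EE [simp]: "in_cl n (E a) (E b) \<longleftrightarrow> a = b \<and> 1 \<le> a \<and> a \<le> n"
  and in_cl_EH [simp]: "in_cl n (E a) (H j) \<longleftrightarrow> 1 \<le> a \<and> a \<le> n \<and> (j = 1 \<or> j = 2)"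
  and in_cl_HP [simp]: "in_cl n (H i) (P b) \<longleftrightarrow> False"
  and in_cl_HE [simp]: "in_cl n (H i) (E b) \<longleftrightarrow> False"
  and in_cl_HH [simp]: "in_cl n (H i) (H j) \<longleftrightarrow> i = j \<and> (i = 1 \<or> i = 2)"
proof -
  have "a = predc n b \<longleftrightarrow> b = succc n a" if "1 \<le> a" "a \<le> n" "1 \<le> b" "b \<le> n"
    using that unfolding predc_def succc_def by auto
  thus "in_cl n (P a) (P b) \<longleftrightarrow> a = b \<and> 1 \<le> a \<and> a \<le> n"
    and "in_cl n (P a) (E b) \<longleftrightarrow> 1 \<le> a \<and> a \<le> n \<and> 1 \<le> b \<and> b \<le> n \<and> (b = a \<or> b = succc n a)"
    and "in_cl n (P a) (H j) \<longleftrightarrow> 1 \<le> a \<and> a \<le> n \<and> (j = 1 \<or> j = 2)"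
    and "in_cl n (E a) (P b) \<longleftrightarrow> False"
    and "in_cl n (E a) (E b) \<longleftrightarrow> a = b \<and> 1 \<le> a \<and> a \<le> n"
    and "in_cl n (E a) (H j) \<longleftrightarrow> 1 \<le> a \<and> a \<le> n \<and> (j = 1 \<or> j = 2)"
    and "in_cl n (H i) (P b) \<longleftrightarrow> False"
    and "in_cl n (H i) (E b) \<longleftrightarrow> False"
    and "in_cl n (H i) (H j) \<longleftrightarrow> i = j \<and> (i = 1 \<or> i = 2)"
    unfolding in_cl_def by auto
qed

lemma in_cl_refl [simp]: "in_cl n S S \<longleftrightarrow> S \<in> strata n"
  unfolding in_cl_def by auto

lemma in_cl_trans: "in_cl n A B \<Longrightarrow> in_cl n B C \<Longrightarrow> in_cl n A C"
  by (cases A; cases B; cases C) auto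

lemma succc_bij: "1 \<le> n \<Longrightarrow> bij_betw (succc n) {1..n} {1..n}"
proof (rule bij_betw_imageI)
  show "inj_on (succc n) {1..n}" unfolding inj_on_def succc_def by auto
  assume n: "1 \<le> n"
  have "j \<in> succc n ` {1..n}" if j: "j \<in> {1..n}" for j
  proof (cases "j = 1")
    case True
    then have "j = succc n n" unfolding succc_def by simp
    thus ?thesis using n by auto
  next
    case False
    then have "j = succc n (j - 1)" "j - 1 \<in> {1..n}" using j unfolding succc_def by auto
    thus ?thesis by blast
  qed
  moreover have "succc n ` {1..n} \<subseteq> {1..n}" using n by (auto simp: succc_def)
  ultimately show "succc n ` {1..n} = {1..n}" by blast
qed

lemma cyclic_telescope:
  assumes "1 \<le> n"
  shows "(\<Sum>i=1..n. (f i - f (succc n i) :: 'a::ab_group_add)) = 0"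
proof -
  have "(\<Sum>i=1..n. f (succc n i)) = (\<Sum>i=1..n. f i)"
    by (rule sum.reindex_bij_betw[OF succc_bij[OF assms]])
  thus ?thesis by (simp add: sum_subtractf)
qed

lemma succc_invariant_const:
  assumes inv: "\<And>i. 1 \<le> i \<Longrightarrow> i \<le> n \<Longrightarrow> w (succc n i) = w i"
  shows "1 \<le> i \<Longrightarrow> i \<le> n \<Longrightarrow> w i = w 1"
proof (induction i)
  case (Suc j)
  show ?case
  proof (cases "j = 0")
    case False
    then have "w (succc n j) = w j" using inv Suc.prems by simp
    moreover have "succc n j = Suc j" using Suc.prems unfolding succc_def by simp
    ultimately show ?thesis using Suc False by auto
  qed simp
qed simp

section \<open>Endomorphisms of J as coefficient arrays\<close>

text \<open>Entry (Y, X) of an array of degree p at source degree k may be nonzero only when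
  I_X is a summand of J^k, I_Y a summand of J^(k+p) and Y lies in the closure of X: these are
  exactly the canonical morphisms I_X \<rightarrow> I_Y.\<close>
definition admissible :: "nat \<Rightarrow> int \<Rightarrow> int \<Rightarrow> stratum \<Rightarrow> stratum \<Rightarrow> bool" where
  "admissible n p k Y X \<longleftrightarrow> X \<in> summJ n k \<and> Y \<in> summJ n (k + p) \<and> in_cl n Y X"

definition trunc :: "nat \<Rightarrow> int \<Rightarrow> (int \<Rightarrow> stratum \<Rightarrow> stratum \<Rightarrow> 'r::idom) \<Rightarrow> int \<Rightarrow> stratum \<Rightarrow> stratum \<Rightarrow> 'r" where
  "trunc n p c = (\<lambda>k Y X. if admissible n p k Y X then c k Y X else 0)"

definition Mat :: "nat \<Rightarrow> int \<Rightarrow> (int \<Rightarrow> stratum \<Rightarrow> stratum \<Rightarrow> 'r::idom) \<Rightarrow> 'r endo" where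
  "Mat n p c = (\<lambda>k T v. if v \<in> Jmod n k T
      then (\<lambda>Y. if in_cl n T Y then \<Sum>X\<in>strata n. trunc n p c k Y X * v X else 0) else (\<lambda>_. 0))"

definition delta :: "stratum \<Rightarrow> stratum \<Rightarrow> 'r::idom" where
  "delta X = (\<lambda>Z. if Z = X then 1 else 0)"

definition coef :: "'r::idom endo \<Rightarrow> int \<Rightarrow> stratum \<Rightarrow> stratum \<Rightarrow> 'r" where
  "coef f k Y X = f k Y (delta X) Y"

lemma Jmod_iff: "v \<in> Jmod n k T \<longleftrightarrow> (\<forall>X. v X \<noteq> 0 \<longrightarrow> X \<in> summJ n k \<and> in_cl n T X)"
  unfolding Jmod_def Isum_def by auto

lemma zero_Jmod [simp]: "(\<lambda>_. 0) \<in> Jmod n k T"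
  unfolding Jmod_iff by auto

lemma trunc_nonzero: "trunc n p c k Y X \<noteq> 0 \<Longrightarrow> admissible n p k Y X"
  unfolding trunc_def by (auto split: if_splits)

lemma trunc_not_in_cl: "\<not> in_cl n Y Z \<Longrightarrow> trunc n q c k Y Z = 0"
  unfolding trunc_def admissible_def by auto

lemma Jmod_add: "v \<in> Jmod n k T \<Longrightarrow> w \<in> Jmod n k T \<Longrightarrow> (\<lambda>X. v X + w X) \<in> Jmod n k T"
  unfolding Jmod_iff by (metis add.right_neutral add_0)

lemma Jmod_smul: "v \<in> Jmod n k T \<Longrightarrow> (\<lambda>X. r * v X) \<in> Jmod n k T"
  unfolding Jmod_iff by auto

lemma Jmod_restr: "v \<in> Jmod n k T \<Longrightarrow> restr n T' v \<in> Jmod n k T'"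
  unfolding Jmod_iff restr_def by auto

lemma Mat_Jmod:
  assumes v: "v \<in> Jmod n k T"
  shows "Mat n p c k T v \<in> Jmod n (k + p) T"
proof (unfold Jmod_iff, intro allI impI)
  fix Y assume "Mat n p c k T v Y \<noteq> 0"
  hence cl: "in_cl n T Y" and s: "(\<Sum>X\<in>strata n. trunc n p c k Y X * v X) \<noteq> 0"
    using v by (auto simp: Mat_def split: if_splits)
  from s obtain X where "trunc n p c k Y X \<noteq> 0" by (metis (mono_tags, lifting) mult_eq_0_iff sum.neutral)
  hence "admissible n p k Y X" by (rule trunc_nonzero)
  thus "Y \<in> summJ n (k + p) \<and> in_cl n T Y" using cl unfolding admissible_def by auto
qed

text \<open>Matrices of canonical morphisms commute with the structure maps: an entry (Y, X) only
  involves strata X whose closure contains Y.\<close>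
lemma Mat_natural:
  assumes ar: "arrow n T T'" and v: "v \<in> Jmod n k T"
  shows "restr n T' (Mat n p c k T v) = Mat n p c k T' (restr n T' v)"
proof
  fix Y
  have TT': "in_cl n T T'" using ar unfolding arrow_def by auto
  show "restr n T' (Mat n p c k T v) Y = Mat n p c k T' (restr n T' v) Y"
  proof (cases "in_cl n T' Y")
    case True
    have eqX: "trunc n p c k Y X * v X = trunc n p c k Y X * restr n T' v X" for X
      using True in_cl_trans[of n T' Y X] trunc_nonzero[of n p c k Y X]
      unfolding restr_def admissible_def by auto
    have "(\<Sum>X\<in>strata n. trunc n p c k Y X * v X)
        = (\<Sum>X\<in>strata n. trunc n p c k Y X * restr n T' v X)"
      by (rule sum.cong[OF refl eqX])
    thus ?thesis using True in_cl_trans[OF TT' True] v Jmod_restr[OF v]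
      by (simp add: Mat_def restr_def)
  qed (use v Jmod_restr in \<open>simp add: Mat_def restr_def\<close>)
qed

lemma hom_Mat: "hom n p (Mat n p c)"
  unfolding hom_def
proof (intro allI conjI ballI impI)
  fix k T and v :: "stratum \<Rightarrow> 'a" assume "v \<notin> Jmod n k T"
  thus "Mat n p c k T v = (\<lambda>_. 0)" by (simp add: Mat_def)
next
  fix k T and v w :: "stratum \<Rightarrow> 'a" assume v: "v \<in> Jmod n k T" and w: "w \<in> Jmod n k T"
  thus "Mat n p c k T (\<lambda>X. v X + w X) = (\<lambda>Y. Mat n p c k T v Y + Mat n p c k T w Y)"
    using Jmod_add[OF v w] by (auto simp: Mat_def distrib_left sum.distrib)
next
  fix k T and v :: "stratum \<Rightarrow> 'a" and r assume v: "v \<in> Jmod n k T"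
  thus "Mat n p c k T (\<lambda>X. r * v X) = (\<lambda>Y. r * Mat n p c k T v Y)"
    using Jmod_smul[OF v] by (auto simp: Mat_def sum_distrib_left mult.left_commute)
qed (simp_all add: Mat_Jmod Mat_natural)

lemma Mat_in_EndJ [simp]: "Mat n p c \<in> EndJ n p"
  unfolding EndJ_def using hom_Mat by blast

lemma hom_outside: "hom n p f \<Longrightarrow> v \<notin> Jmod n k T \<Longrightarrow> f k T v = (\<lambda>_. 0)"
  and hom_out: "hom n p f \<Longrightarrow> v \<in> Jmod n k T \<Longrightarrow> f k T v \<in> Jmod n (k + p) T"
  and hom_add: "hom n p f \<Longrightarrow> v \<in> Jmod n k T \<Longrightarrow> w \<in> Jmod n k T \<Longrightarrow>
     f k T (\<lambda>X. v X + w X) = (\<lambda>Y. f k T v Y + f k T w Y)"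
  and hom_smul: "hom n p f \<Longrightarrow> v \<in> Jmod n k T \<Longrightarrow> f k T (\<lambda>X. r * v X) = (\<lambda>Y. r * f k T v Y)"
  and hom_restr: "hom n p f \<Longrightarrow> arrow n T T' \<Longrightarrow> v \<in> Jmod n k T \<Longrightarrow>
     restr n T' (f k T v) = f k T' (restr n T' v)"
  unfolding hom_def by blast+

lemma hom_zero_vec: "hom n p f \<Longrightarrow> f k T (\<lambda>_. 0) = (\<lambda>_. 0)"
  using hom_smul[of n p f "\<lambda>_. 0" k T 0] by simp

lemma hom_Jmod: "hom n p f \<Longrightarrow> f k T v \<in> Jmod n (k + p) T"
  by (cases "v \<in> Jmod n k T") (simp_all add: hom_out hom_outside)

lemma hom_lin_sum:
  fixes f :: "'r::idom endo"
  assumes h: "hom n p f" and fin: "finite S"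
    and units: "\<And>X. X \<in> S \<Longrightarrow> (delta X :: stratum \<Rightarrow> 'r) \<in> Jmod n k Y"
  shows "f k Y (\<lambda>Z. \<Sum>X\<in>S. a X * delta X Z) = (\<lambda>Z'. \<Sum>X\<in>S. a X * f k Y (delta X) Z')"
  using fin units
proof (induction S rule: finite_induct)
  case empty thus ?case using hom_zero_vec[OF h] by simp
next
  case (insert x F)
  have j1: "(\<lambda>Z. a x * delta x Z) \<in> Jmod n k Y"
    using insert.prems[of x] unfolding Jmod_iff by auto
  have j2: "(\<lambda>Z. \<Sum>X\<in>F. a X * delta X Z) \<in> Jmod n k Y"
    unfolding Jmod_iff
  proof (intro allI impI)
    fix Z assume "(\<Sum>X\<in>F. a X * delta X Z) \<noteq> (0::'r)"
    then obtain X where X: "X \<in> F" "a X * delta X Z \<noteq> (0::'r)" by (meson sum.neutral)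
    hence "delta X Z \<noteq> (0::'r)" by auto
    moreover have "(delta X :: stratum \<Rightarrow> 'r) \<in> Jmod n k Y" using insert.prems X by auto
    ultimately show "Z \<in> summJ n k \<and> in_cl n Y Z" unfolding Jmod_iff by blast
  qed
  have "f k Y (\<lambda>Z. \<Sum>X\<in>insert x F. a X * delta X Z)
      = f k Y (\<lambda>Z. a x * delta x Z + (\<Sum>X\<in>F. a X * delta X Z))"
    using insert.hyps by simp
  also have "\<dots> = (\<lambda>Z'. f k Y (\<lambda>Z. a x * delta x Z) Z' + f k Y (\<lambda>Z. \<Sum>X\<in>F. a X * delta X Z) Z')"
    using hom_add[OF h j1 j2] .
  also have "f k Y (\<lambda>Z. a x * delta x Z) = (\<lambda>Z'. a x * f k Y (delta x) Z')"
    using hom_smul[OF h, of "delta x" k Y "a x"] insert.prems[of x] by simp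
  also have "f k Y (\<lambda>Z. \<Sum>X\<in>F. a X * delta X Z) = (\<lambda>Z'. \<Sum>X\<in>F. a X * f k Y (delta X) Z')"
    using insert.IH insert.prems by simp
  finally show ?case using insert.hyps by simp
qed

text \<open>The value of a morphism at vertex T and component Y only depends on the restriction of the
  input to the vertex Y (naturality along the arrow T \<rightarrow> Y).\<close>
lemma hom_localize:
  assumes h: "hom n p f" and TY: "in_cl n T Y" and v: "v \<in> Jmod n k T"
  shows "f k T v Y = f k Y (restr n Y v) Y"
proof (cases "T = Y")
  case True
  hence "restr n Y v = v" using v unfolding restr_def Jmod_iff by (auto intro!: ext)
  thus ?thesis using True by simp
next
  case False
  hence "arrow n T Y" using TY unfolding arrow_def by simp
  from hom_restr[OF h this v] show ?thesis
    using in_cl_strata[OF TY] by (metis in_cl_refl restr_def)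
qed

definition summands :: "nat \<Rightarrow> int \<Rightarrow> stratum \<Rightarrow> stratum set" where
  "summands n k Y = {X \<in> strata n. X \<in> summJ n k \<and> in_cl n Y X}"

lemma finite_summands [simp]: "finite (summands n k Y)"
  unfolding summands_def by simp

lemma delta_Jmod: "X \<in> summands n k Y \<Longrightarrow> (delta X :: stratum \<Rightarrow> 'r::idom) \<in> Jmod n k Y"
  unfolding summands_def Jmod_iff delta_def by auto

lemma Jmod_expansion:
  assumes w: "w \<in> Jmod n k Y"
  shows "w = (\<lambda>Z. \<Sum>X\<in>summands n k Y. w X * delta X Z)"
proof
  fix Z
  have "(\<Sum>X\<in>summands n k Y. w X * delta X Z) = (if Z \<in> summands n k Y then w Z else 0)"
    by (simp add: delta_def sum.delta' if_distrib[of "\<lambda>x. _ * x"] cong: if_cong)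
  also have "\<dots> = w Z"
    using w in_cl_strata[of n Y Z] unfolding Jmod_iff summands_def by auto
  finally show "w Z = (\<Sum>X\<in>summands n k Y. w X * delta X Z)" by simp
qed

lemma hom_apply_coef:
  assumes h: "hom n p f" and w: "w \<in> Jmod n k Y"
  shows "f k Y w Y = (\<Sum>X\<in>summands n k Y. w X * coef f k Y X)"
proof -
  have "f k Y w = f k Y (\<lambda>Z. \<Sum>X\<in>summands n k Y. w X * delta X Z)"
    by (rule arg_cong[OF Jmod_expansion[OF w]])
  also have "\<dots> = (\<lambda>Z'. \<Sum>X\<in>summands n k Y. w X * f k Y (delta X) Z')"
    by (rule hom_lin_sum[OF h finite_summands delta_Jmod])
  finally show ?thesis by (simp add: coef_def)
qed

lemma hom_repr:
  fixes f :: "'r::idom endo"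
  assumes h: "hom n p f"
  shows "f = Mat n p (coef f)"
proof (intro ext)
  fix k T v Y
  show "f k T v Y = Mat n p (coef f) k T v Y"
  proof (cases "v \<in> Jmod n k T \<and> in_cl n T Y")
    case False
    show ?thesis
    proof (cases "v \<in> Jmod n k T")
      case True
      thus ?thesis using False hom_out[OF h True] unfolding Jmod_iff by (auto simp: Mat_def)
    qed (simp add: hom_outside[OF h] Mat_def)
  next
    case True
    hence v: "v \<in> Jmod n k T" and TY: "in_cl n T Y" by auto
    have entry: "restr n Y v X * coef f k Y X = trunc n p (coef f) k Y X * v X"
      if X: "X \<in> summands n k Y" for X
    proof -
      have "f k Y (delta X) \<in> Jmod n (k + p) Y" using hom_out[OF h delta_Jmod[OF X]] .
      hence "Y \<notin> summJ n (k + p) \<Longrightarrow> coef f k Y X = 0"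
        unfolding coef_def Jmod_iff using in_cl_strata[OF TY] by auto
      thus ?thesis using X unfolding summands_def restr_def trunc_def admissible_def by auto
    qed
    have "f k T v Y = f k Y (restr n Y v) Y" by (rule hom_localize[OF h TY v])
    also have "\<dots> = (\<Sum>X\<in>summands n k Y. restr n Y v X * coef f k Y X)"
      using hom_apply_coef[OF h Jmod_restr[OF v]] .
    also have "\<dots> = (\<Sum>X\<in>summands n k Y. trunc n p (coef f) k Y X * v X)"
      using entry by (rule sum.cong[OF refl])
    also have "\<dots> = (\<Sum>X\<in>strata n. trunc n p (coef f) k Y X * v X)"
      by (rule sum.mono_neutral_left) (auto simp: summands_def trunc_def admissible_def)
    finally show ?thesis using v TY by (simp add: Mat_def)
  qed
qed

lemma EndJ_repr: "f \<in> EndJ n p \<Longrightarrow> \<exists>c. f = Mat n p c"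
  unfolding EndJ_def using hom_repr by blast

lemma coef_Mat: "coef (Mat n p c) = trunc n p c"
proof (intro ext)
  fix k Y X
  show "coef (Mat n p c) k Y X = trunc n p c k Y X"
  proof (cases "(delta X :: stratum \<Rightarrow> 'a) \<in> Jmod n k Y")
    case False
    hence "\<not> admissible n p k Y X" unfolding admissible_def Jmod_iff delta_def by (auto split: if_splits)
    thus ?thesis using False unfolding coef_def trunc_def by (simp add: Mat_def)
  next
    case True
    hence X: "X \<in> summJ n k" "in_cl n Y X" unfolding Jmod_iff delta_def by (metis one_neq_zero)+
    have "(\<Sum>Z\<in>strata n. trunc n p c k Y Z * delta X Z) = trunc n p c k Y X"
      using summJ_strata[OF X(1)] by (simp add: delta_def if_distrib[of "\<lambda>x. _ * x"] cong: if_cong)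
    thus ?thesis using True in_cl_strata[OF X(2)] unfolding coef_def by (simp add: Mat_def)
  qed
qed

lemma Mat_eq_iff: "Mat n p c = Mat n p c' \<longleftrightarrow> (\<forall>k Y X. admissible n p k Y X \<longrightarrow> c k Y X = c' k Y X)"
proof
  assume "Mat n p c = Mat n p c'"
  hence eq: "trunc n p c = trunc n p c'" by (metis coef_Mat)
  show "\<forall>k Y X. admissible n p k Y X \<longrightarrow> c k Y X = c' k Y X"
  proof (intro allI impI)
    fix k Y X assume "admissible n p k Y X"
    moreover have "trunc n p c k Y X = trunc n p c' k Y X" by (simp add: eq)
    ultimately show "c k Y X = c' k Y X" by (simp add: trunc_def)
  qed
next
  assume "\<forall>k Y X. admissible n p k Y X \<longrightarrow> c k Y X = c' k Y X"
  hence eq: "trunc n p c = trunc n p c'" unfolding trunc_def by (auto intro!: ext)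
  show "Mat n p c = Mat n p c'" unfolding Mat_def eq by (rule refl)
qed

lemma Mat_entry: "Mat n p c = Mat n p c' \<Longrightarrow> admissible n p k Y X \<Longrightarrow> c k Y X = c' k Y X"
  unfolding Mat_eq_iff by blast

definition arr_prod :: "nat \<Rightarrow> int \<Rightarrow> int \<Rightarrow> (int \<Rightarrow> stratum \<Rightarrow> stratum \<Rightarrow> 'r::idom)
   \<Rightarrow> (int \<Rightarrow> stratum \<Rightarrow> stratum \<Rightarrow> 'r) \<Rightarrow> int \<Rightarrow> stratum \<Rightarrow> stratum \<Rightarrow> 'r" where
  "arr_prod n q p c2 c1 = (\<lambda>k Y X. \<Sum>Z\<in>strata n. trunc n q c2 (k + p) Y Z * trunc n p c1 k Z X)"

lemma trunc_arr_prod: "trunc n (p + q) (arr_prod n q p c2 c1) = arr_prod n q p c2 c1"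
proof (intro ext)
  fix k Y X
  show "trunc n (p + q) (arr_prod n q p c2 c1) k Y X = arr_prod n q p c2 c1 k Y X"
  proof (cases "arr_prod n q p c2 c1 k Y X = 0")
    case False
    then obtain Z where "trunc n q c2 (k + p) Y Z * trunc n p c1 k Z X \<noteq> 0"
      unfolding arr_prod_def by (meson sum.neutral)
    hence "admissible n q (k + p) Y Z" "admissible n p k Z X" using trunc_nonzero by auto
    hence "admissible n (p + q) k Y X"
      unfolding admissible_def by (auto simp: add.assoc intro: in_cl_trans)
    thus ?thesis unfolding trunc_def by simp
  qed (simp add: trunc_def)
qed

lemma compE_Mat: "compE p (Mat n q c2) (Mat n p c1) = Mat n (p + q) (arr_prod n q p c2 c1)"
proof (intro ext)
  fix k T and v :: "stratum \<Rightarrow> 'a" and Y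
  show "compE p (Mat n q c2) (Mat n p c1) k T v Y = Mat n (p + q) (arr_prod n q p c2 c1) k T v Y"
  proof (cases "v \<in> Jmod n k T \<and> in_cl n T Y")
    case False
    thus ?thesis unfolding compE_def
      using hom_zero_vec[OF hom_Mat] hom_out[OF hom_Mat] by (auto simp: Mat_def)
  next
    case True
    hence v: "v \<in> Jmod n k T" and TY: "in_cl n T Y" by auto
    have u: "Mat n p c1 k T v \<in> Jmod n (k + p) T" using hom_out[OF hom_Mat v] .
    have inner: "trunc n q c2 (k + p) Y Z * Mat n p c1 k T v Z
        = trunc n q c2 (k + p) Y Z * (\<Sum>X\<in>strata n. trunc n p c1 k Z X * v X)" for Z
    proof (cases "trunc n q c2 (k + p) Y Z = 0")
      case False
      hence "in_cl n T Z" using trunc_nonzero TY in_cl_trans unfolding admissible_def by blast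
      thus ?thesis using v by (simp add: Mat_def)
    qed simp
    have "(\<Sum>Z\<in>strata n. trunc n q c2 (k + p) Y Z * Mat n p c1 k T v Z)
        = (\<Sum>X\<in>strata n. arr_prod n q p c2 c1 k Y X * v X)"
      unfolding inner arr_prod_def sum_distrib_left sum_distrib_right
      by (subst sum.swap) (simp add: mult.assoc)
    thus ?thesis using v u TY unfolding compE_def by (simp add: Mat_def trunc_arr_prod)
  qed
qed

definition arr_dJ :: "nat \<Rightarrow> int \<Rightarrow> stratum \<Rightarrow> stratum \<Rightarrow> 'r::idom" where
  "arr_dJ n k = (if k = -1 then cd0 n else if k = 0 then cd1 n else (\<lambda>_ _. 0))"

lemma cd0_simps [simp]:
  "cd0 n (E i) (H j) = (if 1 \<le> i \<and> i \<le> n then (if j = 1 then 1 else if j = 2 then -1 else 0) else 0)"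
  "cd0 n (E i) (E j) = 0" "cd0 n (E i) (P j) = 0"
  "cd0 n (P i) X = 0" "cd0 n (H i) X = 0"
  unfolding cd0_def by auto

lemma cd1_simps [simp]:
  "cd1 n (P i) X = (if 1 \<le> i \<and> i \<le> n
     then (if X = E i then 1 else 0) - (if X = E (succc n i) then 1 else 0) else 0)"
  "cd1 n (E i) X = 0" "cd1 n (H i) X = 0"
  unfolding cd1_def by auto

lemma arr_dJ_simps [simp]: "arr_dJ n (-1) = cd0 n" "arr_dJ n 0 = cd1 n"
  "k \<noteq> -1 \<Longrightarrow> k \<noteq> 0 \<Longrightarrow> arr_dJ n k = (\<lambda>_ _. 0)"
  unfolding arr_dJ_def by auto

lemma trunc_arr_dJ: "trunc n 1 (arr_dJ n :: int \<Rightarrow> stratum \<Rightarrow> stratum \<Rightarrow> 'r::idom) = arr_dJ n"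
proof (intro ext)
  fix k Y X
  have "admissible n 1 k Y X" if "(arr_dJ n k Y X :: 'r) \<noteq> 0"
  proof -
    have "k = -1 \<or> k = 0" using that by (auto simp: arr_dJ_def split: if_splits)
    thus ?thesis using that unfolding admissible_def
      by (cases Y; cases X) (auto split: if_splits)
  qed
  thus "trunc n 1 (arr_dJ n) k Y X = (arr_dJ n k Y X :: 'r)" unfolding trunc_def by auto
qed

lemma dJ_Mat: "(\<lambda>k. dJ n k) = Mat n 1 (arr_dJ n)"
  by (intro ext) (simp add: dJ_def Mat_def trunc_arr_dJ canmap_def arr_dJ_def)

lemma addE_Mat: "addE (Mat n p a) (Mat n p b) = Mat n p (\<lambda>k Y X. a k Y X + b k Y X)"
  unfolding addE_def
  by (intro ext) (auto simp: Mat_def trunc_def sum.distrib[symmetric] distrib_right intro!: sum.cong)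

lemma subE_Mat: "subE (Mat n p a) (Mat n p b) = Mat n p (\<lambda>k Y X. a k Y X - b k Y X)"
  unfolding subE_def
  by (intro ext) (auto simp: Mat_def trunc_def sum_subtractf[symmetric] left_diff_distrib intro!: sum.cong)

lemma smulE_Mat: "smulE r (Mat n p a) = Mat n p (\<lambda>k Y X. r * a k Y X)"
  unfolding smulE_def by (intro ext) (auto simp: Mat_def trunc_def sum_distrib_left intro!: sum.cong)

lemma zeroE_Mat: "zeroE = Mat n p (\<lambda>_ _ _. 0)"
  unfolding zeroE_def by (intro ext) (simp add: Mat_def trunc_def)

lemma idE_Mat: "idE n = Mat n 0 (\<lambda>k Y X. if Y = X then 1 else 0)"
proof (intro ext)
  fix k T v Y
  show "idE n k T v Y = Mat n 0 (\<lambda>k Y X. if Y = X then 1 else 0) k T v Y"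
  proof (cases "v \<in> Jmod n k T")
    case True
    have "(\<Sum>X\<in>strata n. trunc n 0 (\<lambda>k Y X. if Y = X then 1 else 0) k Y X * v X)
         = (\<Sum>X\<in>strata n. if X = Y then (if Y \<in> summJ n k then v Y else 0) else 0)"
      by (rule sum.cong) (auto simp: trunc_def admissible_def dest: summJ_strata)
    also have "\<dots> = (if Y \<in> strata n \<and> Y \<in> summJ n k then v Y else 0)"
      by (simp add: sum.delta)
    finally have "Mat n 0 (\<lambda>k Y X. if Y = X then 1 else 0) k T v Y
        = (if in_cl n T Y then (if Y \<in> strata n \<and> Y \<in> summJ n k then v Y else 0) else 0)"
      using True by (simp add: Mat_def)
    moreover have "v Y \<noteq> 0 \<Longrightarrow> in_cl n T Y \<and> Y \<in> strata n \<and> Y \<in> summJ n k"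
      using True unfolding Jmod_iff by (auto dest: in_cl_strata)
    ultimately show ?thesis using True by (auto simp: idE_def)
  qed (simp add: idE_def Mat_def)
qed

definition sgn_deg :: "int \<Rightarrow> 'r::idom" where
  "sgn_deg p = (if even p then 1 else -1)"

definition arr_d :: "nat \<Rightarrow> int \<Rightarrow> (int \<Rightarrow> stratum \<Rightarrow> stratum \<Rightarrow> 'r::idom) \<Rightarrow> int \<Rightarrow> stratum \<Rightarrow> stratum \<Rightarrow> 'r" where
  "arr_d n p c = (\<lambda>k Y X. arr_prod n 1 p (arr_dJ n) c k Y X - sgn_deg p * arr_prod n p 1 c (arr_dJ n) k Y X)"

lemma dEnd_Mat: "dEnd n p (Mat n p c) = Mat n (p + 1) (arr_d n p c)"
proof -
  have "dEnd n p (Mat n p c) = subE (compE p (\<lambda>k. dJ n k) (Mat n p c))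
        (smulE (sgn_deg p) (compE 1 (Mat n p c) (\<lambda>k. dJ n k)))"
    unfolding dEnd_def subE_def smulE_def compE_def sgn_deg_def by simp
  also have "\<dots> = subE (Mat n (p + 1) (arr_prod n 1 p (arr_dJ n) c))
        (smulE (sgn_deg p) (Mat n (p + 1) (arr_prod n p 1 c (arr_dJ n))))"
    unfolding dJ_Mat compE_Mat by (simp add: add.commute)
  finally show ?thesis by (simp add: smulE_Mat subE_Mat arr_d_def)
qed

lemma hom_dJ: "hom n 1 (\<lambda>k. dJ n k)"
  unfolding dJ_Mat by (rule hom_Mat)

lemma hom_diff:
  assumes h: "hom n p f" and v: "v \<in> Jmod n k T" and w: "w \<in> Jmod n k T"
  shows "f k T (\<lambda>X. v X - w X) = (\<lambda>Y. f k T v Y - f k T w Y)"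
proof -
  have mw: "(\<lambda>X. (-1) * w X) \<in> Jmod n k T" using w unfolding Jmod_iff by auto
  have "f k T (\<lambda>X. v X - w X) = f k T (\<lambda>X. v X + (-1) * w X)" by simp
  also have "\<dots> = (\<lambda>Y. f k T v Y + f k T (\<lambda>X. (-1) * w X) Y)" by (rule hom_add[OF h v mw])
  finally show ?thesis using hom_smul[OF h w, of "-1"] by simp
qed

lemma dJ_add:
  assumes "v \<in> Jmod n k T" "w \<in> Jmod n k T"
  shows "dJ n k T (\<lambda>X. v X + w X) = (\<lambda>Y. dJ n k T v Y + dJ n k T w Y)"
  using hom_add[OF hom_dJ assms] by simp

lemma dJ_diff:
  assumes "v \<in> Jmod n k T" "w \<in> Jmod n k T"
  shows "dJ n k T (\<lambda>X. v X - w X) = (\<lambda>Y. dJ n k T v Y - dJ n k T w Y)"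
  using hom_diff[OF hom_dJ assms] by simp

lemma hom_dEnd: "hom n p f \<Longrightarrow> hom n (p + 1) (dEnd n p f)"
  by (subst hom_repr[of n p f]) (simp_all only: dEnd_Mat hom_Mat)

lemma dEnd_add:
  assumes "hom n p f" "hom n p g"
  shows "dEnd n p (addE f g) = addE (dEnd n p f) (dEnd n p g)"
  unfolding dEnd_def addE_def
  using dJ_add[OF hom_Jmod[OF assms(1)] hom_Jmod[OF assms(2)]]
  by (simp add: algebra_simps)

lemma dEnd_sub:
  assumes "hom n p f" "hom n p g"
  shows "dEnd n p (subE f g) = subE (dEnd n p f) (dEnd n p g)"
  unfolding dEnd_def subE_def
  using dJ_diff[OF hom_Jmod[OF assms(1)] hom_Jmod[OF assms(2)]]
  by (simp add: algebra_simps)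

lemma dEnd_zero [simp]: "dEnd n p zeroE = zeroE"
proof -
  have "dJ n k T (\<lambda>_. 0) = (\<lambda>_. (0::'a))" for k T
    using hom_zero_vec[OF hom_dJ, of n k T] by simp
  thus ?thesis unfolding dEnd_def zeroE_def by simp
qed

lemma smulE_zero [simp]: "smulE a zeroE = zeroE"
  unfolding smulE_def zeroE_def by simp

lemma comp_zero_left [simp]: "compE p zeroE f = zeroE"
  unfolding compE_def zeroE_def by simp

lemma comp_zero_right: "hom n q g \<Longrightarrow> compE p g zeroE = zeroE"
  unfolding compE_def zeroE_def by (intro ext) (simp add: hom_zero_vec)

lemma comp_zero_Mat [simp]: "compE p (Mat n q c) zeroE = zeroE"
  by (rule comp_zero_right[OF hom_Mat])

lemma zero_EndJ [simp]: "zeroE \<in> EndJ n p"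
  using Mat_in_EndJ zeroE_Mat by metis

lemma addE_zero_right [simp]: "addE f zeroE = f"
  and addE_zero_left [simp]: "addE zeroE f = f"
  and subE_self [simp]: "subE f f = zeroE"
  and subE_subE [simp]: "subE f (subE f g) = g"
  unfolding addE_def subE_def zeroE_def by simp_all

lemma subE_of_addE: "a = addE u x \<Longrightarrow> x = subE a u"
  unfolding addE_def subE_def by simp

lemma submod_sub: "submod A \<Longrightarrow> f \<in> A \<Longrightarrow> g \<in> A \<Longrightarrow> subE f g \<in> A"
proof -
  assume A: "submod A" "f \<in> A" "g \<in> A"
  have "subE f g = addE f (smulE (-1) g)" unfolding subE_def addE_def smulE_def by simp
  thus ?thesis using A unfolding submod_def by simp
qed

section \<open>Dividing out an acyclic subcomplex\<close>

lemma zero_is_boundary: "zeroE \<in> A (p - 1) \<Longrightarrow> \<exists>y\<in>A (p - 1). zeroE = dEnd n (p - 1) y"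
  by (rule bexI[of _ zeroE]) simp_all

lemma qis_quotient_acyclic:
  assumes sub: "\<And>p. K p \<subseteq> A p"
    and mod: "\<And>p. submod (A p)"
    and hom: "\<And>p f. f \<in> A p \<Longrightarrow> hom n p f"
    and dd: "\<And>p f. f \<in> A p \<Longrightarrow> dEnd n (p + 1) (dEnd n p f) = zeroE"
    and acyclic: "\<And>p x. x \<in> K p \<Longrightarrow> dEnd n p x = zeroE \<Longrightarrow> \<exists>y\<in>K (p - 1). x = dEnd n (p - 1) y"
  shows "qis n A zeroG A K"
  unfolding qis_def
proof (intro allI conjI ballI impI)
  fix p a
  assume "a \<in> qcycles n A zeroG p" and "qbdry n A K p a"
  then obtain b x where a: "a \<in> A p" "dEnd n p a = zeroE" and b: "b \<in> A (p - 1)"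
    and x: "x \<in> K p" "a = addE (dEnd n (p - 1) b) x"
    unfolding qcycles_def qbdry_def zeroG_def by blast
  have hb: "hom n (p - 1) b" and hdb: "hom n p (dEnd n (p - 1) b)"
    using hom[OF b] hom_dEnd[OF hom[OF b]] by auto
  have "dEnd n p x = subE (dEnd n p a) (dEnd n p (dEnd n (p - 1) b))"
    using subE_of_addE[OF x(2)] dEnd_sub[OF hom[OF a(1)] hdb] by simp
  also have "\<dots> = zeroE" using a(2) dd[OF b] by simp
  finally obtain y where y: "y \<in> K (p - 1)" "x = dEnd n (p - 1) y" using acyclic[OF x(1)] by blast
  have "a = addE (dEnd n (p - 1) (addE b y)) zeroE"
    using x(2) y(2) dEnd_add[OF hb hom[OF subsetD[OF sub y(1)]]] by simp
  moreover have "addE b y \<in> A (p - 1)" using mod b sub y(1) unfolding submod_def by blast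
  ultimately show "qbdry n A zeroG p a" unfolding qbdry_def zeroG_def by blast
next
  fix p b
  assume "b \<in> qcycles n A K p"
  hence b: "b \<in> A p" and db: "dEnd n p b \<in> K (p + 1)" unfolding qcycles_def by auto
  obtain y where y: "y \<in> K p" "dEnd n p b = dEnd n p y"
    using acyclic[OF db dd[OF b]] by auto
  have yA: "y \<in> A p" using sub y(1) by blast
  have "subE b y \<in> qcycles n A zeroG p"
    using submod_sub[OF mod b yA] dEnd_sub[OF hom[OF b] hom[OF yA]] y(2)
    unfolding qcycles_def zeroG_def by simp
  moreover have "qbdry n A K p (subE b (subE b y))"
  proof -
    have "subE b (subE b y) = addE (dEnd n (p - 1) zeroE) y" by simp
    moreover have "zeroE \<in> A (p - 1)" using mod unfolding submod_def by blast
    ultimately show ?thesis using y(1) unfolding qbdry_def by blast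
  qed
  ultimately show "\<exists>a\<in>qcycles n A zeroG p. qbdry n A K p (subE b a)" by blast
qed

text \<open>All admissible entries (Y, X) of arrays of any degree: the only nonzero degrees are
  -1, 0, 1 and 2.\<close>
lemma admissible_cases:
  "admissible n p k Y X \<longleftrightarrow>
    (\<exists>j. (j = 1 \<or> j = 2) \<and> p = 0 \<and> k = -1 \<and> Y = H j \<and> X = H j) \<or>
    (\<exists>i j. 1 \<le> i \<and> i \<le> n \<and> (j = 1 \<or> j = 2) \<and> p = 1 \<and> k = -1 \<and> Y = E i \<and> X = H j) \<or>
    (\<exists>i j. 1 \<le> i \<and> i \<le> n \<and> (j = 1 \<or> j = 2) \<and> (p = 1 \<or> p = 2) \<and> k = -1 \<and> Y = P i \<and> X = H j) \<or>
    (\<exists>i. 1 \<le> i \<and> i \<le> n \<and> p = 0 \<and> k = 0 \<and> Y = E i \<and> X = E i) \<or>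
    (\<exists>i. 1 \<le> i \<and> i \<le> n \<and> (p = 0 \<or> p = 1) \<and> k = 0 \<and> Y = P i \<and>
         (X = E i \<or> X = E (succc n i) \<or> X = P i)) \<or>
    (\<exists>i. 1 \<le> i \<and> i \<le> n \<and> (p = -1 \<or> p = 0) \<and> k = 1 \<and> Y = P i \<and> X = P i)"
  unfolding admissible_def by (cases Y; cases X) auto

lemma Mat_eqI: "(\<And>k Y X. admissible n p k Y X \<Longrightarrow> c k Y X = c' k Y X) \<Longrightarrow> Mat n p c = Mat n p c'"
  unfolding Mat_eq_iff by blast

lemma Mat_zero_deg: "p \<noteq> -1 \<Longrightarrow> p \<noteq> 0 \<Longrightarrow> p \<noteq> 1 \<Longrightarrow> p \<noteq> 2 \<Longrightarrow> Mat n p c = zeroE"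
  unfolding zeroE_Mat[of n p] Mat_eq_iff admissible_cases by auto

lemma comp_high_deg: "p + q \<noteq> -1 \<Longrightarrow> p + q \<noteq> 0 \<Longrightarrow> p + q \<noteq> 1 \<Longrightarrow> p + q \<noteq> 2 \<Longrightarrow>
    compE p (Mat n q c2) (Mat n p c1) = zeroE"
  unfolding compE_Mat by (rule Mat_zero_deg) auto

lemma Mat_zero_entry: "Mat n p c = zeroE \<Longrightarrow> admissible n p k Y X \<Longrightarrow> c k Y X = 0"
  using Mat_entry[of n p c "\<lambda>_ _ _. 0"] zeroE_Mat[of n p] by simp

text \<open>A sum over the strata of terms supported on the closure of one stratum has at most five
  terms: a point P_a lies on P_a, E_a, E_(a+1), H_1, H_2.\<close>
lemma sum_closure_P:
  assumes n: "2 \<le> n" and a: "1 \<le> a" "a \<le> n"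
    and F: "\<And>Z. \<not> in_cl n (P a) Z \<Longrightarrow> F Z = 0"
  shows "(\<Sum>Z\<in>strata n. F Z) = F (P a) + F (E a) + F (E (succc n a)) + F (H 1) + F (H 2)"
proof -
  have "(\<Sum>Z\<in>strata n. F Z) = (\<Sum>Z\<in>{P a, E a, E (succc n a), H 1, H 2}. F Z)"
  proof (rule sum.mono_neutral_right)
    show "\<forall>Z\<in>strata n - {P a, E a, E (succc n a), H 1, H 2}. F Z = 0"
    proof
      fix Z assume "Z \<in> strata n - {P a, E a, E (succc n a), H 1, H 2}"
      hence "\<not> in_cl n (P a) Z" by (cases Z) auto
      thus "F Z = 0" by (rule F)
    qed
  qed (use a in auto)
  also have "\<dots> = F (P a) + F (E a) + F (E (succc n a)) + F (H 1) + F (H 2)"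
    using succc_neq[OF n a] by (simp add: add.assoc)
  finally show ?thesis .
qed

lemma sum_closure_E:
  assumes a: "1 \<le> a" "a \<le> n"
    and F: "\<And>Z. \<not> in_cl n (E a) Z \<Longrightarrow> F Z = 0"
  shows "(\<Sum>Z\<in>strata n. F Z) = F (E a) + F (H 1) + F (H 2)"
proof -
  have "(\<Sum>Z\<in>strata n. F Z) = (\<Sum>Z\<in>{E a, H 1, H 2}. F Z)"
  proof (rule sum.mono_neutral_right)
    show "\<forall>Z\<in>strata n - {E a, H 1, H 2}. F Z = 0"
    proof
      fix Z assume "Z \<in> strata n - {E a, H 1, H 2}"
      hence "\<not> in_cl n (E a) Z" by (cases Z) auto
      thus "F Z = 0" by (rule F)
    qed
  qed (use a in auto)
  thus ?thesis by (simp add: add.assoc)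
qed

lemma sum_closure_H:
  assumes j: "j = 1 \<or> j = 2" and F: "\<And>Z. \<not> in_cl n (H j) Z \<Longrightarrow> F Z = 0"
  shows "(\<Sum>Z\<in>strata n. F Z) = F (H j)"
proof -
  have "(\<Sum>Z\<in>strata n. F Z) = (\<Sum>Z\<in>{H j}. F Z)"
  proof (rule sum.mono_neutral_right)
    show "\<forall>Z\<in>strata n - {H j}. F Z = 0"
    proof
      fix Z assume "Z \<in> strata n - {H j}"
      hence "\<not> in_cl n (H j) Z" by (cases Z) auto
      thus "F Z = 0" by (rule F)
    qed
  qed (use j in auto)
  thus ?thesis by simp
qed

lemma arr_prod_P: "2 \<le> n \<Longrightarrow> 1 \<le> a \<Longrightarrow> a \<le> n \<Longrightarrow> arr_prod n q p c2 c1 k (P a) X =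
     trunc n q c2 (k + p) (P a) (P a) * trunc n p c1 k (P a) X
   + trunc n q c2 (k + p) (P a) (E a) * trunc n p c1 k (E a) X
   + trunc n q c2 (k + p) (P a) (E (succc n a)) * trunc n p c1 k (E (succc n a)) X
   + trunc n q c2 (k + p) (P a) (H 1) * trunc n p c1 k (H 1) X
   + trunc n q c2 (k + p) (P a) (H 2) * trunc n p c1 k (H 2) X"
  unfolding arr_prod_def by (rule sum_closure_P) (auto simp: trunc_not_in_cl)

lemma arr_prod_E: "1 \<le> a \<Longrightarrow> a \<le> n \<Longrightarrow> arr_prod n q p c2 c1 k (E a) X =
     trunc n q c2 (k + p) (E a) (E a) * trunc n p c1 k (E a) X
   + trunc n q c2 (k + p) (E a) (H 1) * trunc n p c1 k (H 1) X
   + trunc n q c2 (k + p) (E a) (H 2) * trunc n p c1 k (H 2) X"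
  unfolding arr_prod_def by (rule sum_closure_E) (auto simp: trunc_not_in_cl)

lemma arr_prod_H: "j = 1 \<or> j = 2 \<Longrightarrow> arr_prod n q p c2 c1 k (H j) X =
     trunc n q c2 (k + p) (H j) (H j) * trunc n p c1 k (H j) X"
  unfolding arr_prod_def by (rule sum_closure_H) (auto simp: trunc_not_in_cl)

section \<open>The graded pieces U, I and V\<close>

definition arr0 :: "(nat \<Rightarrow> 'r::idom) \<Rightarrow> 'r \<Rightarrow> 'r \<Rightarrow> int \<Rightarrow> stratum \<Rightarrow> stratum \<Rightarrow> 'r" where
  "arr0 r s t k Y X = (if Y = X then (if k = 0 then (case Y of P i \<Rightarrow> r i | _ \<Rightarrow> s) else s)
       + (if k = -1 \<and> Y = H 1 then t else 0) else 0)"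

definition arr1 :: "(nat \<Rightarrow> 'r::idom) \<Rightarrow> (nat \<Rightarrow> 'r) \<Rightarrow> (nat \<Rightarrow> 'r) \<Rightarrow> int \<Rightarrow> stratum \<Rightarrow> stratum \<Rightarrow> 'r" where
  "arr1 r u w k Y X = (if k = 0 then (case Y of P i \<Rightarrow> if X = P i then r i else 0 | _ \<Rightarrow> 0)
       else if k = -1 \<and> X = H 1 then (case Y of P i \<Rightarrow> u i | E i \<Rightarrow> w i | _ \<Rightarrow> 0) else 0)"

definition arr2 :: "(nat \<Rightarrow> 'r::idom) \<Rightarrow> int \<Rightarrow> stratum \<Rightarrow> stratum \<Rightarrow> 'r" where
  "arr2 c k Y X = (if k = -1 \<and> X = H 1 then (case Y of P i \<Rightarrow> c i | _ \<Rightarrow> 0) else 0)"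

abbreviation u0 :: "nat \<Rightarrow> (nat \<Rightarrow> 'r::idom) \<Rightarrow> 'r \<Rightarrow> 'r \<Rightarrow> 'r endo" where
  "u0 n r s t \<equiv> Mat n 0 (arr0 r s t)"

abbreviation u1 :: "nat \<Rightarrow> (nat \<Rightarrow> 'r::idom) \<Rightarrow> (nat \<Rightarrow> 'r) \<Rightarrow> (nat \<Rightarrow> 'r) \<Rightarrow> 'r endo" where
  "u1 n r u w \<equiv> Mat n 1 (arr1 r u w)"

abbreviation u2 :: "nat \<Rightarrow> (nat \<Rightarrow> 'r::idom) \<Rightarrow> 'r endo" where
  "u2 n c \<equiv> Mat n 2 (arr2 c)"

lemmas arr_simps = arr_prod_P arr_prod_E arr_prod_H trunc_def admissible_def
  arr0_def arr1_def arr2_def sgn_deg_def algebra_simps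

context
  fixes n :: nat
  assumes n: "2 \<le> n"
begin

lemma comp00: "compE 0 (u0 n r s t) (u0 n r' s' t') = u0 n (\<lambda>i. r i * r' i) (s * s') (s * t' + t * s' + t * t')"
  by (simp only: compE_Mat add_0_left, rule Mat_eqI, unfold admissible_cases, elim disjE exE conjE)
    (simp_all add: n arr_simps)

lemma comp10: "compE 0 (u1 n r u w) (u0 n r' s' t') = u1 n (\<lambda>i. r i * r' i) (\<lambda>i. u i * (s' + t')) (\<lambda>i. w i * (s' + t'))"
  by (simp only: compE_Mat add_0_left, rule Mat_eqI, unfold admissible_cases, elim disjE exE conjE)
    (simp_all add: n arr_simps)

lemma comp01: "compE 1 (u0 n r s t) (u1 n r' u' w') = u1 n (\<lambda>i. s * r' i) (\<lambda>i. r i * u' i) (\<lambda>i. s * w' i)"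
  by (simp only: compE_Mat add_0_right, rule Mat_eqI, unfold admissible_cases, elim disjE exE conjE)
    (simp_all add: n arr_simps)

lemma comp20: "compE 0 (u2 n c) (u0 n r' s' t') = u2 n (\<lambda>i. c i * (s' + t'))"
  by (simp only: compE_Mat add_0_left, rule Mat_eqI, unfold admissible_cases, elim disjE exE conjE)
    (simp_all add: n arr_simps)

lemma comp02: "compE 2 (u0 n r s t) (u2 n c) = u2 n (\<lambda>i. s * c i)"
  by (simp only: compE_Mat add_0_right, rule Mat_eqI, unfold admissible_cases, elim disjE exE conjE)
    (simp_all add: n arr_simps)

lemma comp11: "compE 1 (u1 n r u w) (u1 n r' u' w') = u2 n (\<lambda>i. r i * u' i)"
  by (simp only: compE_Mat one_add_one, rule Mat_eqI, unfold admissible_cases, elim disjE exE conjE)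
    (simp_all add: n arr_simps)

lemma d_u0: "dEnd n 0 (u0 n r s t) = u1 n (\<lambda>_. 0) (\<lambda>_. 0) (\<lambda>_. t)"
  by (simp only: dEnd_Mat arr_d_def add_0_left, rule Mat_eqI, unfold admissible_cases, elim disjE exE conjE)
    (simp_all add: n arr_simps)

lemma d_u1: "dEnd n 1 (u1 n r u w) = u2 n (\<lambda>i. w i - w (succc n i))"
  by (simp only: dEnd_Mat arr_d_def one_add_one, rule Mat_eqI, unfold admissible_cases, elim disjE exE conjE)
    (simp_all add: n arr_simps)

end

lemma d_u2: "dEnd n 2 (u2 n c) = zeroE"
  unfolding dEnd_Mat by (rule Mat_zero_deg) auto

lemma add_u0: "addE (u0 n r s t) (u0 n r' s' t') = u0 n (\<lambda>i. r i + r' i) (s + s') (t + t')"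
  and add_u1: "addE (u1 n r u w) (u1 n r' u' w') = u1 n (\<lambda>i. r i + r' i) (\<lambda>i. u i + u' i) (\<lambda>i. w i + w' i)"
  and add_u2: "addE (u2 n c) (u2 n c') = u2 n (\<lambda>i. c i + c' i)"
  and sub_u1: "subE (u1 n r u w) (u1 n r' u' w') = u1 n (\<lambda>i. r i - r' i) (\<lambda>i. u i - u' i) (\<lambda>i. w i - w' i)"
  and smul_u0: "smulE a (u0 n r s t) = u0 n (\<lambda>i. a * r i) (a * s) (a * t)"
  and smul_u1: "smulE a (u1 n r u w) = u1 n (\<lambda>i. a * r i) (\<lambda>i. a * u i) (\<lambda>i. a * w i)"
  and smul_u2: "smulE a (u2 n c) = u2 n (\<lambda>i. a * c i)"
  unfolding addE_Mat subE_Mat smulE_Mat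
  by (rule Mat_eqI, unfold admissible_cases, elim disjE exE conjE, simp_all add: arr_simps)+

lemma zero_u0: "zeroE = u0 n (\<lambda>_. 0) 0 0"
  and zero_u1: "zeroE = u1 n (\<lambda>_. 0) (\<lambda>_. 0) (\<lambda>_. 0)"
  and zero_u2: "zeroE = u2 n (\<lambda>_. 0)"
  by (subst zeroE_Mat, rule Mat_eqI, unfold admissible_cases, elim disjE exE conjE,
      simp_all add: arr_simps)+

lemma id_u0: "idE n = u0 n (\<lambda>_. 1) 1 0"
  unfolding idE_Mat
  by (rule Mat_eqI, unfold admissible_cases, elim disjE exE conjE) (simp_all add: arr_simps)

lemma u0_eq_iff: "u0 n r s t = u0 n r' s' t' \<longleftrightarrow>
    (\<forall>i. 1 \<le> i \<and> i \<le> n \<longrightarrow> r i = r' i) \<and> s = s' \<and> t = t'"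
proof
  assume "u0 n r s t = u0 n r' s' t'"
  hence e: "\<And>k Y X. admissible n 0 k Y X \<Longrightarrow> arr0 r s t k Y X = arr0 r' s' t' k Y X"
    by (rule Mat_entry)
  have "\<And>i. 1 \<le> i \<and> i \<le> n \<longrightarrow> r i = r' i"
    using e[of 0 "P _" "P _"] by (simp add: admissible_def arr0_def)
  moreover have "s = s'" using e[of "-1" "H 2" "H 2"] by (simp add: admissible_def arr0_def)
  moreover have "s + t = s' + t'" using e[of "-1" "H 1" "H 1"] by (simp add: admissible_def arr0_def)
  ultimately show "(\<forall>i. 1 \<le> i \<and> i \<le> n \<longrightarrow> r i = r' i) \<and> s = s' \<and> t = t'" by auto
next
  assume "(\<forall>i. 1 \<le> i \<and> i \<le> n \<longrightarrow> r i = r' i) \<and> s = s' \<and> t = t'"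
  thus "u0 n r s t = u0 n r' s' t'"
    by (intro Mat_eqI, unfold admissible_cases, elim disjE exE conjE) (simp_all add: arr0_def)
qed

lemma u1_eq_iff: "u1 n r u w = u1 n r' u' w' \<longleftrightarrow>
    (\<forall>i. 1 \<le> i \<and> i \<le> n \<longrightarrow> r i = r' i \<and> u i = u' i \<and> w i = w' i)"
proof
  assume "u1 n r u w = u1 n r' u' w'"
  hence e: "\<And>k Y X. admissible n 1 k Y X \<Longrightarrow> arr1 r u w k Y X = arr1 r' u' w' k Y X"
    by (rule Mat_entry)
  show "\<forall>i. 1 \<le> i \<and> i \<le> n \<longrightarrow> r i = r' i \<and> u i = u' i \<and> w i = w' i"
    using e[of 0 "P _" "P _"] e[of "-1" "P _" "H 1"] e[of "-1" "E _" "H 1"]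
    by (simp add: admissible_def arr1_def)
next
  assume "\<forall>i. 1 \<le> i \<and> i \<le> n \<longrightarrow> r i = r' i \<and> u i = u' i \<and> w i = w' i"
  thus "u1 n r u w = u1 n r' u' w'"
    by (intro Mat_eqI, unfold admissible_cases, elim disjE exE conjE) (simp_all add: arr1_def)
qed

lemma u1_coord: "u1 n r u w = u1 n r' u' w' \<Longrightarrow> 1 \<le> i \<Longrightarrow> i \<le> n \<Longrightarrow>
    r i = r' i \<and> u i = u' i \<and> w i = w' i"
  by (simp add: u1_eq_iff)

lemma u2_eq_iff: "u2 n c = u2 n c' \<longleftrightarrow> (\<forall>i. 1 \<le> i \<and> i \<le> n \<longrightarrow> c i = c' i)"
proof
  assume "u2 n c = u2 n c'"
  hence e: "\<And>k Y X. admissible n 2 k Y X \<Longrightarrow> arr2 c k Y X = arr2 c' k Y X"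
    by (rule Mat_entry)
  show "\<forall>i. 1 \<le> i \<and> i \<le> n \<longrightarrow> c i = c' i"
    using e[of "-1" "P _" "H 1"] by (simp add: admissible_def arr2_def)
next
  assume "\<forall>i. 1 \<le> i \<and> i \<le> n \<longrightarrow> c i = c' i"
  thus "u2 n c = u2 n c'"
    by (intro Mat_eqI, unfold admissible_cases, elim disjE exE conjE) (simp_all add: arr2_def)
qed

text \<open>The dg subalgebra U, the dg ideal I \<subseteq> U (degree 1: maps I_{H_1} \<rightarrow> \<oplus> I_{E_i} with
  w_n = 0; degree 2: maps I_{H_1} \<rightarrow> \<oplus> I_{P_i} with coefficient sum 0), and the subalgebra
  V \<subseteq> U (t = 0 in degree 0, w_n = 0 in degree 1) which represents the cohomology of U/I.\<close>
definition Usub :: "nat \<Rightarrow> int \<Rightarrow> 'r::idom endo set" where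
  "Usub n p = (if p = 0 then {u0 n r s t | r s t. True}
     else if p = 1 then {u1 n r u w | r u w. True}
     else if p = 2 then {u2 n c | c. True} else {zeroE})"

definition Iideal :: "nat \<Rightarrow> int \<Rightarrow> 'r::idom endo set" where
  "Iideal n p = (if p = 1 then {u1 n (\<lambda>_. 0) (\<lambda>_. 0) w | w. w n = 0}
     else if p = 2 then {u2 n c | c. (\<Sum>i=1..n. c i) = 0} else {zeroE})"

definition Vsub :: "nat \<Rightarrow> int \<Rightarrow> 'r::idom endo set" where
  "Vsub n p = (if p = 0 then {u0 n r s 0 | r s. True}
     else if p = 1 then {u1 n r u w | r u w. w n = 0}
     else if p = 2 then {u2 n c | c. True} else {zeroE})"

lemma Usub_E:
  assumes "f \<in> Usub n p"
  obtains (deg0) r s t where "p = 0" "f = u0 n r s t"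
    | (deg1) r u w where "p = 1" "f = u1 n r u w"
    | (deg2) c where "p = 2" "f = u2 n c"
    | (other) "p \<noteq> 0" "p \<noteq> 1" "p \<noteq> 2" "f = zeroE"
  using assms unfolding Usub_def by (auto split: if_splits)

lemma Iideal_E:
  assumes "f \<in> Iideal n p"
  obtains (deg1) w where "p = 1" "w n = 0" "f = u1 n (\<lambda>_. 0) (\<lambda>_. 0) w"
    | (deg2) c where "p = 2" "(\<Sum>i=1..n. c i) = 0" "f = u2 n c"
    | (other) "p \<noteq> 1" "p \<noteq> 2" "f = zeroE"
  using assms unfolding Iideal_def by (auto split: if_splits)

lemma Vsub_E:
  assumes "f \<in> Vsub n p"
  obtains (deg0) r s where "p = 0" "f = u0 n r s 0"
    | (deg1) r u w where "p = 1" "w n = 0" "f = u1 n r u w"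
    | (deg2) c where "p = 2" "f = u2 n c"
    | (other) "p \<noteq> 0" "p \<noteq> 1" "p \<noteq> 2" "f = zeroE"
  using assms unfolding Vsub_def by (auto split: if_splits)

lemma Usub_I [simp]: "u0 n r s t \<in> Usub n 0" "u1 n r u w \<in> Usub n 1" "u2 n c \<in> Usub n 2"
  unfolding Usub_def by auto

lemma Iideal_I: "w n = 0 \<Longrightarrow> u1 n (\<lambda>_. 0) (\<lambda>_. 0) w \<in> Iideal n 1"
  "(\<Sum>i=1..n. c i) = 0 \<Longrightarrow> u2 n c \<in> Iideal n 2"
  unfolding Iideal_def by auto

lemma Vsub_I: "u0 n r s 0 \<in> Vsub n 0" "w n = 0 \<Longrightarrow> u1 n r u w \<in> Vsub n 1" "u2 n c \<in> Vsub n 2"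
  unfolding Vsub_def by auto

lemma zero_Usub: "zeroE \<in> Usub n p"
  and zero_Iideal: "zeroE \<in> Iideal n p"
  and zero_Vsub: "zeroE \<in> Vsub n p"
  unfolding Usub_def Iideal_def Vsub_def using zero_u0 zero_u1 zero_u2 by fastforce+

lemma Usub_EndJ: "Usub n p \<subseteq> EndJ n p"
  unfolding Usub_def by auto

lemma hom_Usub: "f \<in> Usub n p \<Longrightarrow> hom n p f"
  using Usub_EndJ unfolding EndJ_def by blast

lemma Vsub_Usub: "Vsub n p \<subseteq> Usub n p"
  unfolding Vsub_def Usub_def by auto

lemma Iideal_Vsub: "Iideal n p \<subseteq> Vsub n p"
  using zero_Vsub[of n p] unfolding Iideal_def Vsub_def by auto

lemma Iideal_Usub: "Iideal n p \<subseteq> Usub n p"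
  using Iideal_Vsub Vsub_Usub by blast

text \<open>A cyclic difference has coefficient sum zero, so d(U_1) lies in I.\<close>
lemma d_u1_Iideal: "2 \<le> n \<Longrightarrow> dEnd n 1 (u1 n r u w) \<in> Iideal n 2"
  unfolding d_u1 by (rule Iideal_I(2), rule cyclic_telescope) simp_all

lemma d_Vsub: "2 \<le> n \<Longrightarrow> f \<in> Vsub n p \<Longrightarrow> dEnd n p f \<in> Iideal n (p + 1)"
  by (erule Vsub_E) (auto simp: d_u0 d_u1_Iideal d_u2 zero_Iideal zero_u1[symmetric])

lemma dd_Usub: "2 \<le> n \<Longrightarrow> f \<in> Usub n p \<Longrightarrow> dEnd n (p + 1) (dEnd n p f) = zeroE"
  by (erule Usub_E) (auto simp: d_u0 d_u1 d_u2 zero_u2[symmetric])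

lemma submod_Usub: "submod (Usub n p :: 'r::idom endo set)"
  unfolding submod_def
proof (intro conjI ballI allI)
  fix f g :: "'r endo" assume f: "f \<in> Usub n p" and g: "g \<in> Usub n p"
  show "addE f g \<in> Usub n p"
    using f g by (cases rule: Usub_E[OF f]; cases rule: Usub_E[OF g]) (auto simp: add_u0 add_u1 add_u2)
next
  fix a and f :: "'r endo" assume f: "f \<in> Usub n p"
  show "smulE a f \<in> Usub n p"
    using f by (cases rule: Usub_E) (auto simp: smul_u0 smul_u1 smul_u2 zero_Usub)
qed (rule zero_Usub)

lemma submod_Vsub: "submod (Vsub n p :: 'r::idom endo set)"
  unfolding submod_def
proof (intro conjI ballI allI)
  fix f g :: "'r endo" assume f: "f \<in> Vsub n p" and g: "g \<in> Vsub n p"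
  show "addE f g \<in> Vsub n p"
    using f g by (cases rule: Vsub_E[OF f]; cases rule: Vsub_E[OF g]) (auto simp: add_u0 add_u1 add_u2 Vsub_I)
next
  fix a and f :: "'r endo" assume f: "f \<in> Vsub n p"
  show "smulE a f \<in> Vsub n p"
    using f by (cases rule: Vsub_E) (auto simp: smul_u0 smul_u1 smul_u2 Vsub_I zero_Vsub)
qed (rule zero_Vsub)

lemma submod_Iideal: "submod (Iideal n p :: 'r::idom endo set)"
  unfolding submod_def
proof (intro conjI ballI allI)
  fix f g :: "'r endo" assume f: "f \<in> Iideal n p" and g: "g \<in> Iideal n p"
  show "addE f g \<in> Iideal n p"
    using f g by (cases rule: Iideal_E[OF f]; cases rule: Iideal_E[OF g])
      (auto simp: add_u1 add_u2 Iideal_I sum.distrib)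
next
  fix a and f :: "'r endo" assume f: "f \<in> Iideal n p"
  show "smulE a f \<in> Iideal n p"
    using f by (cases rule: Iideal_E)
      (auto simp: smul_u1 smul_u2 Iideal_I zero_Iideal sum_distrib_left[symmetric])
qed (rule zero_Iideal)

lemma dEnd_Usub: "2 \<le> n \<Longrightarrow> f \<in> Usub n p \<Longrightarrow> dEnd n p f \<in> Usub n (p + 1)"
  by (erule Usub_E) (auto simp: d_u0 d_u1 d_u2 zero_Usub)

lemma dEnd_Vsub: "2 \<le> n \<Longrightarrow> f \<in> Vsub n p \<Longrightarrow> dEnd n p f \<in> Vsub n (p + 1)"
  using d_Vsub Iideal_Vsub by blast

lemma dEnd_Iideal: "2 \<le> n \<Longrightarrow> f \<in> Iideal n p \<Longrightarrow> dEnd n p f \<in> Iideal n (p + 1)"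
  using d_Vsub Iideal_Vsub by blast

text \<open>Products vanish in total degree outside 0..2; otherwise they follow the table.\<close>
lemma comp_Usub:
  assumes n: "2 \<le> n" and f: "f \<in> Usub n p" and g: "g \<in> Usub n q"
  shows "compE p g f \<in> Usub n (p + q)"
  using f
proof (cases rule: Usub_E)
  case other thus ?thesis using comp_zero_right[OF hom_Usub[OF g]] zero_Usub by simp
next
  case deg0
  thus ?thesis using g
    by (cases rule: Usub_E[OF g]) (auto simp: comp00[OF n] comp10[OF n] comp20[OF n] zero_Usub)
next
  case deg1
  thus ?thesis using g
    by (cases rule: Usub_E[OF g]) (auto simp: comp01[OF n] comp11[OF n] comp_high_deg zero_Usub)
next
  case deg2
  thus ?thesis using g
    by (cases rule: Usub_E[OF g]) (auto simp: comp02[OF n] comp_high_deg zero_Usub)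
qed

lemma comp_Vsub:
  assumes n: "2 \<le> n" and f: "f \<in> Vsub n p" and g: "g \<in> Vsub n q"
  shows "compE p g f \<in> Vsub n (p + q)"
  using f
proof (cases rule: Vsub_E)
  case other
  have "hom n q g" using g Vsub_Usub hom_Usub by blast
  thus ?thesis using other comp_zero_right[OF \<open>hom n q g\<close>] zero_Vsub by simp
next
  case deg0
  thus ?thesis using g
    by (cases rule: Vsub_E[OF g]) (auto simp: comp00[OF n] comp10[OF n] comp20[OF n] Vsub_I zero_Vsub)
next
  case deg1
  thus ?thesis using g
    by (cases rule: Vsub_E[OF g]) (auto simp: comp01[OF n] comp11[OF n] comp_high_deg Vsub_I zero_Vsub)
next
  case deg2
  thus ?thesis using g
    by (cases rule: Vsub_E[OF g]) (auto simp: comp02[OF n] comp_high_deg Vsub_I zero_Vsub)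
qed

text \<open>I absorbs products with U on both sides: the coefficient conditions w_n = 0 and
  \<Sum> c_i = 0 are preserved by the scalar actions of U, and I \<cdot> I = 0.\<close>
lemma comp_Iideal:
  assumes n: "2 \<le> n" and f: "f \<in> Usub n p" and g: "g \<in> Iideal n q"
  shows "compE p g f \<in> Iideal n (p + q) \<and> compE q f g \<in> Iideal n (p + q)"
  using f
proof (cases rule: Usub_E)
  case other
  have "hom n q g" using g Iideal_Usub hom_Usub by blast
  thus ?thesis using other comp_zero_right[OF \<open>hom n q g\<close>] zero_Iideal by simp
next
  case deg0
  thus ?thesis using g
    by (cases rule: Iideal_E[OF g]) (auto simp: comp01[OF n] comp10[OF n] comp20[OF n] comp02[OF n]
        zero_Iideal Iideal_I sum_distrib_left[symmetric] sum_distrib_right[symmetric])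
next
  case deg1
  thus ?thesis using g
    by (cases rule: Iideal_E[OF g]) (auto simp: comp11[OF n] comp_high_deg zero_Iideal Iideal_I)
next
  case deg2
  thus ?thesis using g
    by (cases rule: Iideal_E[OF g]) (auto simp: comp_high_deg zero_Iideal)
qed

lemma Usub_subalg: "2 \<le> n \<Longrightarrow> dg_subalg n (Usub n) (EndJ n)"
  unfolding dg_subalg_def
  using id_u0 Usub_EndJ submod_Usub dEnd_Usub comp_Usub by (metis Usub_I(1) image_subsetI)

lemma Vsub_subalg: "2 \<le> n \<Longrightarrow> dg_subalg n (Vsub n) (Usub n)"
  unfolding dg_subalg_def
  using id_u0 Vsub_Usub submod_Vsub dEnd_Vsub comp_Vsub by (metis Vsub_I(1) image_subsetI)

lemma Iideal_ideal: "2 \<le> n \<Longrightarrow> dg_ideal n (Iideal n) (Usub n)"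
  unfolding dg_ideal_def
  using Iideal_Usub submod_Iideal dEnd_Iideal comp_Iideal by (metis image_subsetI)

text \<open>A degree 1 cycle u1 r u w has constant w (its differential is the cyclic difference of w).\<close>
lemma u1_cycle_const:
  assumes n: "2 \<le> n" and d: "dEnd n 1 (u1 n r u w) = zeroE" and i: "1 \<le> i" "i \<le> n"
  shows "w i = w n"
proof -
  have "u2 n (\<lambda>i. w i - w (succc n i)) = u2 n (\<lambda>_. 0)"
    using d by (simp add: d_u1[OF n] zero_u2[symmetric])
  hence "w (succc n j) = w j" if "1 \<le> j" "j \<le> n" for j using that by (simp add: u2_eq_iff)
  hence const: "w j = w 1" if "1 \<le> j" "j \<le> n" for j using succc_invariant_const that by blast
  show ?thesis using const[OF i] const[of n] n by simp
qed

lemma cyclic_primitive: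
  fixes c :: "nat \<Rightarrow> 'a::ab_group_add"
  assumes i: "1 \<le> i" "i \<le> n" and sum0: "(\<Sum>m=1..n. c m) = 0"
  shows "(\<Sum>m=i..<n. c m) - (\<Sum>m=succc n i..<n. c m) = c i"
proof (cases "i = n")
  case True
  have "(\<Sum>m=1..<n. c m) + c n = 0" using sum0 i True by (simp add: atLeastLessThanSuc_atLeastAtMost[symmetric])
  thus ?thesis using True by (simp add: succc_def neg_eq_iff_add_eq_0 add.commute)
next
  case False
  hence "succc n i = Suc i" "i < n" using i unfolding succc_def by auto
  thus ?thesis by (simp add: sum.atLeast_Suc_lessThan)
qed

lemma u2_sum0_boundary:
  assumes n: "2 \<le> n" and sum0: "(\<Sum>i=1..n. c i) = 0"
  shows "u2 n c = dEnd n 1 (u1 n (\<lambda>_. 0) (\<lambda>_. 0) (\<lambda>i. \<Sum>m=i..<n. c m))"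
  unfolding d_u1[OF n] u2_eq_iff using cyclic_primitive[OF _ _ sum0] by simp

lemma Iideal_acyclic:
  assumes n: "2 \<le> n" and x: "x \<in> Iideal n p" and dx: "dEnd n p x = zeroE"
  shows "\<exists>y\<in>Iideal n (p - 1). x = dEnd n (p - 1) y"
  using x
proof (cases rule: Iideal_E)
  case (deg1 w)
  hence cyc: "dEnd n 1 (u1 n (\<lambda>_. 0) (\<lambda>_. 0) w) = zeroE" using dx by simp
  have "w i = 0" if "1 \<le> i" "i \<le> n" for i using u1_cycle_const[OF n cyc that] deg1(2) by simp
  hence "x = zeroE" using deg1(3) by (simp add: zero_u1[of n] u1_eq_iff)
  thus ?thesis using zero_is_boundary[OF zero_Iideal] by simp
next
  case (deg2 c)
  moreover have "u1 n (\<lambda>_. 0) (\<lambda>_. 0) (\<lambda>i. \<Sum>m=i..<n. c m) \<in> Iideal n 1"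
    by (rule Iideal_I) simp
  ultimately show ?thesis using u2_sum0_boundary[OF n] by auto
next
  case other
  thus ?thesis using zero_is_boundary[OF zero_Iideal] by simp
qed

lemma qis_U_quotient: "2 \<le> n \<Longrightarrow> qis n (Usub n) zeroG (Usub n) (Iideal n)"
  by (rule qis_quotient_acyclic)
    (simp_all add: Iideal_Usub submod_Usub hom_Usub dd_Usub Iideal_acyclic)

lemma u1_split:
  assumes n: "2 \<le> n"
  shows "subE (u1 n r u w) (u1 n r u (\<lambda>_. 0)) =
    addE (dEnd n 0 (u0 n (\<lambda>_. 0) 0 (w n))) (u1 n (\<lambda>_. 0) (\<lambda>_. 0) (\<lambda>i. w i - w n))"
  by (simp add: sub_u1 d_u0[OF n] add_u1 u1_eq_iff)

lemma qbdry_self: "zeroE \<in> A (p - 1) \<Longrightarrow> zeroE \<in> K p \<Longrightarrow> qbdry n A K p (subE b b)"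
  unfolding qbdry_def by (rule bexI[of _ zeroE], rule bexI[of _ zeroE]) simp_all

lemma Usub_cycle_mod_I:
  assumes n: "2 \<le> n" and b: "b \<in> Usub n p" and db: "dEnd n p b \<in> Iideal n (p + 1)"
  shows "\<exists>a\<in>Vsub n p. qbdry n (Usub n) (Iideal n) p (subE b a)"
  using b
proof (cases rule: Usub_E)
  case (deg0 r s t)
  then obtain w where wn: "w n = 0" and eq: "u1 n (\<lambda>_. 0) (\<lambda>_. 0) (\<lambda>_. t) = u1 n (\<lambda>_. 0) (\<lambda>_. 0) w"
    using db by (auto simp: d_u0[OF n] elim: Iideal_E)
  have "t = 0" using u1_coord[OF eq, of n] wn n by simp
  hence "b \<in> Vsub n p" using deg0 by (simp add: Vsub_I)
  thus ?thesis using qbdry_self zero_Usub zero_Iideal by blast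
next
  case (deg1 r u w)
  have "subE b (u1 n r u (\<lambda>_. 0)) =
      addE (dEnd n (p - 1) (u0 n (\<lambda>_. 0) 0 (w n))) (u1 n (\<lambda>_. 0) (\<lambda>_. 0) (\<lambda>i. w i - w n))"
    using deg1 u1_split[OF n] by simp
  moreover have "u1 n (\<lambda>_. 0) (\<lambda>_. 0) (\<lambda>i. w i - w n) \<in> Iideal n p"
    using deg1 Iideal_I(1)[of "\<lambda>i. w i - w n" n] by simp
  ultimately have "qbdry n (Usub n) (Iideal n) p (subE b (u1 n r u (\<lambda>_. 0)))"
    unfolding qbdry_def using deg1 Usub_I(1) by fastforce
  moreover have "u1 n r u (\<lambda>_. 0) \<in> Vsub n p" using deg1 by (simp add: Vsub_I)
  ultimately show ?thesis by blast
next
  case deg2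
  hence "b \<in> Vsub n p" by (simp add: Vsub_I)
  thus ?thesis using qbdry_self zero_Usub zero_Iideal by blast
next
  case other
  hence "b \<in> Vsub n p" using zero_Vsub by simp
  thus ?thesis using qbdry_self zero_Usub zero_Iideal by blast
qed

text \<open>An element of V which is a boundary in U/I is already a boundary in V/I: the boundary
  can be taken from V, since d(u0 r s t) \<in> V + I forces t = 0 and replacing w by w - w_n in
  u1 r u w does not change its differential.\<close>
lemma Vsub_boundary:
  assumes n: "2 \<le> n" and a: "a \<in> Vsub n p" and b: "b \<in> Usub n (p - 1)" and x: "x \<in> Iideal n p"
    and abx: "a = addE (dEnd n (p - 1) b) x"
  shows "qbdry n (Vsub n) (Iideal n) p a"
  using b
proof (cases rule: Usub_E)
  case (deg0 r' s' t')
  hence p: "p = 1" by simp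
  from a p obtain r u w where a1: "a = u1 n r u w" and wn: "w n = 0" by (auto elim: Vsub_E)
  from x p obtain w' where x1: "x = u1 n (\<lambda>_. 0) (\<lambda>_. 0) w'" and wn': "w' n = 0"
    by (auto elim: Iideal_E)
  have "u1 n r u w = u1 n (\<lambda>i. 0 + 0) (\<lambda>i. 0 + 0) (\<lambda>i. t' + w' i)"
    using abx a1 deg0 x1 p by (simp add: d_u0[OF n] add_u1)
  hence "t' = 0" using wn wn' n by (simp add: u1_eq_iff)
  hence "b \<in> Vsub n (p - 1)" using deg0 by (simp add: Vsub_I)
  thus ?thesis using x abx unfolding qbdry_def by blast
next
  case (deg1 r u w)
  let ?b = "u1 n r u (\<lambda>i. w i - w n)"
  have "?b \<in> Vsub n (p - 1)" using deg1 by (simp add: Vsub_I)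
  moreover have "dEnd n (p - 1) ?b = dEnd n (p - 1) b"
    using deg1 by (simp add: d_u1[OF n])
  ultimately show ?thesis using x abx unfolding qbdry_def by metis
next
  case deg2
  hence "b \<in> Vsub n (p - 1)" by (simp add: Vsub_I)
  thus ?thesis using x abx unfolding qbdry_def by blast
next
  case other
  hence "b \<in> Vsub n (p - 1)" using zero_Vsub by simp
  thus ?thesis using x abx unfolding qbdry_def by blast
qed

lemma qis_V_quotient: "2 \<le> n \<Longrightarrow> qis n (Vsub n) (Iideal n) (Usub n) (Iideal n)"
  unfolding qis_def
proof (intro allI conjI ballI impI)
  fix p a
  assume n: "2 \<le> n" and "a \<in> qcycles n (Vsub n) (Iideal n) p" and "qbdry n (Usub n) (Iideal n) p a"
  then obtain b x where "a \<in> Vsub n p" "b \<in> Usub n (p - 1)" "x \<in> Iideal n p"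
    "a = addE (dEnd n (p - 1) b) x"
    unfolding qcycles_def qbdry_def by blast
  thus "qbdry n (Vsub n) (Iideal n) p a" by (rule Vsub_boundary[OF n])
next
  fix p b
  assume n: "2 \<le> n" and "b \<in> qcycles n (Usub n) (Iideal n) p"
  then obtain a where "a \<in> Vsub n p" "qbdry n (Usub n) (Iideal n) p (subE b a)"
    using Usub_cycle_mod_I[OF n] unfolding qcycles_def by blast
  moreover have "a \<in> qcycles n (Vsub n) (Iideal n) p" if "a \<in> Vsub n p"
    using that d_Vsub[OF n] unfolding qcycles_def by blast
  ultimately show "\<exists>a\<in>qcycles n (Vsub n) (Iideal n) p. qbdry n (Usub n) (Iideal n) p (subE b a)"
    by blast
qed

section \<open>U computes the cohomology of End J\<close>

lemmas d_entry_simps = arr_d_def arr_prod_P arr_prod_E arr_prod_H trunc_def admissible_def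
  sgn_deg_def algebra_simps

lemma d_m1_HH: "2 \<le> n \<Longrightarrow> j = 1 \<or> j = 2 \<Longrightarrow> arr_d n (-1) c (-1) (H j) (H j) = 0"
  by (auto simp: d_entry_simps)

context
  fixes n i :: nat and c :: "int \<Rightarrow> stratum \<Rightarrow> stratum \<Rightarrow> 'r::idom"
  assumes n: "2 \<le> n" and i: "1 \<le> i" "i \<le> n"
begin

lemma d_m1_EE: "arr_d n (-1) c 0 (E i) (E i) = 0"
  using n i by (simp add: d_entry_simps)
lemma d_m1_PE: "arr_d n (-1) c 0 (P i) (E i) = c 1 (P i) (P i)"
  using n i succc_neq[OF n i] by (simp add: d_entry_simps)
lemma d_m1_PEs: "arr_d n (-1) c 0 (P i) (E (succc n i)) = - c 1 (P i) (P i)"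
  using n i succc_neq[OF n i] by (simp add: d_entry_simps)
lemma d_m1_PP0: "arr_d n (-1) c 0 (P i) (P i) = 0"
  using n i by (simp add: d_entry_simps)
lemma d_m1_PP1: "arr_d n (-1) c 1 (P i) (P i) = 0"
  using n i by (simp add: d_entry_simps)

lemma d_0_EH1: "arr_d n 0 c (-1) (E i) (H 1) = c (-1) (H 1) (H 1) - c 0 (E i) (E i)"
  using n i by (simp add: d_entry_simps)
lemma d_0_EH2: "arr_d n 0 c (-1) (E i) (H 2) = c 0 (E i) (E i) - c (-1) (H 2) (H 2)"
  using n i by (simp add: d_entry_simps)
lemma d_0_PH1: "arr_d n 0 c (-1) (P i) (H 1) = - (c 0 (P i) (E i) + c 0 (P i) (E (succc n i)))"
  using n i succc_neq[OF n i] by (simp add: d_entry_simps)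
lemma d_0_PH2: "arr_d n 0 c (-1) (P i) (H 2) = c 0 (P i) (E i) + c 0 (P i) (E (succc n i))"
  using n i succc_neq[OF n i] by (simp add: d_entry_simps)
lemma d_0_PE: "arr_d n 0 c 0 (P i) (E i) = c 0 (E i) (E i) - c 1 (P i) (P i)"
  using n i succc_neq[OF n i] by (simp add: d_entry_simps)
lemma d_0_PEs: "arr_d n 0 c 0 (P i) (E (succc n i)) = c 1 (P i) (P i) - c 0 (E (succc n i)) (E (succc n i))"
  using n i succc_neq[OF n i] by (simp add: d_entry_simps)
lemma d_0_PP: "arr_d n 0 c 0 (P i) (P i) = 0"
  using n i succc_neq[OF n i] by (simp add: d_entry_simps)

lemma d_1_PH1: "arr_d n 1 c (-1) (P i) (H 1) = c (-1) (E i) (H 1) - c (-1) (E (succc n i)) (H 1)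
   + (c 0 (P i) (E i) + c 0 (P i) (E (succc n i)))"
  using n i succc_neq[OF n i] by (simp add: d_entry_simps)
lemma d_1_PH2: "arr_d n 1 c (-1) (P i) (H 2) = c (-1) (E i) (H 2) - c (-1) (E (succc n i)) (H 2)
   - (c 0 (P i) (E i) + c 0 (P i) (E (succc n i)))"
  using n i succc_neq[OF n i] by (simp add: d_entry_simps)

end

text \<open>Cycles of degree -1 vanish: their only entries I_{P_i} \<rightarrow> I_{P_i} (J^1 \<rightarrow> J^0) reappear in
  the differential.\<close>
lemma cycle_m1_zero:
  assumes n: "2 \<le> n" and d: "dEnd n (-1) (Mat n (-1) c) = zeroE"
  shows "Mat n (-1) c = zeroE"
proof -
  have d': "Mat n 0 (arr_d n (-1) c) = zeroE" using d by (simp add: dEnd_Mat)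
  have "c 1 (P i) (P i) = 0" if "1 \<le> i" "i \<le> n" for i
    using Mat_zero_entry[OF d', of 0 "P i" "E i"] that by (simp add: admissible_def d_m1_PE[OF n that])
  hence "Mat n (-1) c = Mat n (-1) (\<lambda>_ _ _. 0)" unfolding Mat_eq_iff admissible_cases by auto
  thus ?thesis by (simp add: zeroE_Mat[of n "-1", symmetric])
qed

text \<open>Homotopy for degree 0 cycles: the entries I_{E_i} \<rightarrow> I_{P_i} from J^1 to J^0.\<close>
definition homot0 :: "(nat \<Rightarrow> 'r::idom) \<Rightarrow> int \<Rightarrow> stratum \<Rightarrow> stratum \<Rightarrow> 'r" where
  "homot0 e k Y X = (if k = 1 then (case Y of P i \<Rightarrow> if X = P i then e i else 0 | _ \<Rightarrow> 0) else 0)"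

text \<open>A degree 0 cycle is homotopic to its diagonal part, an element of U: the cycle conditions
  force all E_i-diagonal entries and the H_2-entry to agree with the P_i-entry of J^1 (\<sigma>).\<close>
lemma cycle0_mod_U:
  fixes cb :: "int \<Rightarrow> stratum \<Rightarrow> stratum \<Rightarrow> 'r::idom"
  assumes n: "2 \<le> n" and d: "dEnd n 0 (Mat n 0 cb) = zeroE"
  shows "\<exists>c. subE (Mat n 0 cb) (u0 n (\<lambda>i. cb 0 (P i) (P i)) (cb (-1) (H 2) (H 2)) 0)
            = dEnd n (-1) (Mat n (-1) c)"
proof -
  have d': "Mat n 1 (arr_d n 0 cb) = zeroE" using d by (simp add: dEnd_Mat)
  define \<sigma> where "\<sigma> = cb (-1) (H 2) (H 2)"
  have F2: "cb 0 (E i) (E i) = \<sigma>" if "1 \<le> i" "i \<le> n" for i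
    using Mat_zero_entry[OF d', of "-1" "E i" "H 2"] that unfolding \<sigma>_def
    by (simp add: admissible_def d_0_EH2[OF n that])
  have F1: "cb (-1) (H 1) (H 1) = cb 0 (E i) (E i)" if "1 \<le> i" "i \<le> n" for i
    using Mat_zero_entry[OF d', of "-1" "E i" "H 1"] that
    by (simp add: admissible_def d_0_EH1[OF n that, unfolded One_nat_def])
  have F0: "cb (-1) (H 1) (H 1) = \<sigma>" using F1[of 1] F2[of 1] n by simp
  have F3: "cb 0 (P i) (E (succc n i)) = - cb 0 (P i) (E i)" if "1 \<le> i" "i \<le> n" for i
    using Mat_zero_entry[OF d', of "-1" "P i" "H 2"] that
    by (simp add: admissible_def d_0_PH2[OF n that] eq_neg_iff_add_eq_0 add.commute)
  have F4: "cb 1 (P i) (P i) = \<sigma>" if "1 \<le> i" "i \<le> n" for i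
    using Mat_zero_entry[OF d', of 0 "P i" "E i"] that F2[OF that]
    by (simp add: admissible_def d_0_PE[OF n that])
  have "Mat n 0 (\<lambda>k Y X. cb k Y X - arr0 (\<lambda>i. cb 0 (P i) (P i)) \<sigma> 0 k Y X)
      = Mat n 0 (arr_d n (-1) (homot0 (\<lambda>i. cb 0 (P i) (E i))))"
    by (rule Mat_eqI, unfold admissible_cases, elim disjE exE conjE)
      (use n succc_neq[OF n] in \<open>simp_all add: d_m1_HH[OF n] d_m1_EE d_m1_PE d_m1_PEs d_m1_PP0
        d_m1_PP1 arr0_def homot0_def F0 F0[unfolded One_nat_def] F2 F3 F4 \<sigma>_def\<close>)
  thus ?thesis unfolding \<sigma>_def by (auto simp: subE_Mat dEnd_Mat)
qed

text \<open>Homotopy for degree 1 cycles, built from the H_2-entries of the cycle.\<close>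
definition homot1 :: "'r \<Rightarrow> (int \<Rightarrow> stratum \<Rightarrow> stratum \<Rightarrow> 'r::idom) \<Rightarrow> int \<Rightarrow> stratum \<Rightarrow> stratum \<Rightarrow> 'r" where
  "homot1 K cb k Y X = (if k = -1 then (if Y = H 1 \<and> X = H 1 then K else 0)
    else if k = 0 then (case Y of E i \<Rightarrow> if X = E i then cb (-1) (E i) (H 2) else 0
                            | P i \<Rightarrow> if X = E i then cb (-1) (P i) (H 2) else 0 | _ \<Rightarrow> 0)
    else if k = 1 then (case Y of P i \<Rightarrow> if X = P i then cb (-1) (E i) (H 2) - cb 0 (P i) (E i) else 0
                            | _ \<Rightarrow> 0)
    else 0)"

text \<open>A degree 1 cycle is homotopic to an element of U with w = 0: the cycle conditions say
  that the sums of the H_1- and H_2-entries into I_{E_i} are independent of i (= K).\<close>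
lemma cycle1_mod_U:
  fixes cb :: "int \<Rightarrow> stratum \<Rightarrow> stratum \<Rightarrow> 'r::idom"
  assumes n: "2 \<le> n" and d: "dEnd n 1 (Mat n 1 cb) = zeroE"
  shows "\<exists>c. subE (Mat n 1 cb)
              (u1 n (\<lambda>i. cb 0 (P i) (P i)) (\<lambda>i. cb (-1) (P i) (H 1) + cb (-1) (P i) (H 2)) (\<lambda>_. 0))
            = dEnd n 0 (Mat n 0 c)"
proof -
  have d': "Mat n 2 (arr_d n 1 cb) = zeroE" using d by (simp add: dEnd_Mat one_add_one)
  have G1: "cb (-1) (E i) (H 1) - cb (-1) (E (succc n i)) (H 1)
      + (cb 0 (P i) (E i) + cb 0 (P i) (E (succc n i))) = 0" if "1 \<le> i" "i \<le> n" for i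
    using Mat_zero_entry[OF d', of "-1" "P i" "H 1"] that
    by (simp only: d_1_PH1[OF n that]) (simp add: admissible_def)
  have G2: "cb (-1) (E i) (H 2) - cb (-1) (E (succc n i)) (H 2)
      - (cb 0 (P i) (E i) + cb 0 (P i) (E (succc n i))) = 0" if "1 \<le> i" "i \<le> n" for i
    using Mat_zero_entry[OF d', of "-1" "P i" "H 2"] that
    by (simp only: d_1_PH2[OF n that]) (simp add: admissible_def)
  define y where "y i = cb (-1) (E i) (H 1) + cb (-1) (E i) (H 2)" for i
  have "y (succc n i) = y i" if "1 \<le> i" "i \<le> n" for i
    using G1[OF that] G2[OF that] unfolding y_def by (simp add: algebra_simps)
  hence yc: "y i = y 1" if "1 \<le> i" "i \<le> n" for i using succc_invariant_const that by blast
  define K where "K = cb (-1) (E 1) (H 1) + cb (-1) (E 1) (H 2)"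
  have Y1: "cb (-1) (E i) (H 1) = K - cb (-1) (E i) (H 2)" if "1 \<le> i" "i \<le> n" for i
    using yc[OF that] unfolding y_def K_def by (simp add: algebra_simps)
  have Y2: "cb 0 (P i) (E (succc n i))
      = cb (-1) (E i) (H 2) - cb (-1) (E (succc n i)) (H 2) - cb 0 (P i) (E i)"
    if "1 \<le> i" "i \<le> n" for i using G2[OF that] by (simp add: algebra_simps)
  have "Mat n 1 (\<lambda>k Y X. cb k Y X - arr1 (\<lambda>i. cb 0 (P i) (P i))
          (\<lambda>i. cb (-1) (P i) (H 1) + cb (-1) (P i) (H 2)) (\<lambda>_. 0) k Y X)
      = Mat n 1 (arr_d n 0 (homot1 K cb))"
    by (rule Mat_eqI, unfold admissible_cases, elim disjE exE conjE)
      (use n succc_neq[OF n] in \<open>simp_all add: d_0_EH1[unfolded One_nat_def] d_0_EH2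
        d_0_PH1[unfolded One_nat_def] d_0_PH2 d_0_PE d_0_PEs d_0_PP arr1_def homot1_def
        Y1[unfolded One_nat_def] Y2 algebra_simps\<close>)
  thus ?thesis by (auto simp: subE_Mat dEnd_Mat)
qed

text \<open>Homotopy for degree 2 elements: the entries I_{H_2} \<rightarrow> I_{P_i} moved to I_{E_i}.\<close>
definition homot2 :: "(int \<Rightarrow> stratum \<Rightarrow> stratum \<Rightarrow> 'r::idom) \<Rightarrow> int \<Rightarrow> stratum \<Rightarrow> stratum \<Rightarrow> 'r" where
  "homot2 cb k Y X = (if k = 0 then (case Y of P i \<Rightarrow> if X = E i then - cb (-1) (P i) (H 2) else 0
                                        | _ \<Rightarrow> 0) else 0)"

lemma deg2_mod_U:
  fixes cb :: "int \<Rightarrow> stratum \<Rightarrow> stratum \<Rightarrow> 'r::idom"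
  assumes n: "2 \<le> n"
  shows "\<exists>c. subE (Mat n 2 cb) (u2 n (\<lambda>i. cb (-1) (P i) (H 1) + cb (-1) (P i) (H 2)))
            = dEnd n 1 (Mat n 1 c)"
proof -
  have "Mat n 2 (\<lambda>k Y X. cb k Y X - arr2 (\<lambda>i. cb (-1) (P i) (H 1) + cb (-1) (P i) (H 2)) k Y X)
      = Mat n 2 (arr_d n 1 (homot2 cb))"
    by (rule Mat_eqI, unfold admissible_cases, elim disjE exE conjE)
      (use n succc_neq[OF n] in \<open>simp_all add: d_1_PH1[unfolded One_nat_def] d_1_PH2 arr2_def
        homot2_def algebra_simps\<close>)
  thus ?thesis by (auto simp: subE_Mat dEnd_Mat one_add_one)
qed

text \<open>Invariants of U vanishing on boundaries of End J: in degree 0 all coordinates r_i and s;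
  in degree 1 the coordinates r_i and u_i; in degree 2 the coefficient sum.\<close>
lemma bdry0_zero:
  assumes n: "2 \<le> n" and e: "u0 n r s 0 = dEnd n (-1) (Mat n (-1) cb)"
  shows "u0 n r s 0 = zeroE"
proof -
  have e': "u0 n r s 0 = Mat n 0 (arr_d n (-1) cb)" using e by (simp add: dEnd_Mat)
  have "s = 0"
    using Mat_entry[OF e', of "-1" "H 2" "H 2"] by (simp add: admissible_def arr0_def d_m1_HH[OF n])
  moreover have "r i = 0" if "1 \<le> i" "i \<le> n" for i
    using Mat_entry[OF e', of 0 "P i" "P i"] that by (simp add: admissible_def arr0_def d_m1_PP0[OF n that])
  ultimately show ?thesis by (simp add: zero_u0[of n] u0_eq_iff)
qed

lemma bdry1_coords:
  assumes n: "2 \<le> n" and e: "u1 n r u w = dEnd n 0 (Mat n 0 cb)" and i: "1 \<le> i" "i \<le> n"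
  shows "r i = 0 \<and> u i = 0"
proof -
  have e': "u1 n r u w = Mat n 1 (arr_d n 0 cb)" using e by (simp add: dEnd_Mat)
  have "r i = 0"
    using Mat_entry[OF e', of 0 "P i" "P i"] i by (simp add: admissible_def arr1_def d_0_PP[OF n i])
  moreover have "u i = 0"
    using Mat_entry[OF e', of "-1" "P i" "H 1"] Mat_entry[OF e', of "-1" "P i" "H 2"] i
    by (simp only: d_0_PH1[OF n i] d_0_PH2[OF n i]) (simp add: admissible_def arr1_def add_eq_0_iff)
  ultimately show ?thesis by simp
qed

lemma bdry2_sum:
  assumes n: "2 \<le> n" and e: "u2 n c = dEnd n 1 (Mat n 1 cb)"
  shows "(\<Sum>i=1..n. c i) = 0"
proof -
  have e': "u2 n c = Mat n 2 (arr_d n 1 cb)" using e by (simp add: dEnd_Mat one_add_one)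
  define y where "y i = cb (-1) (E i) (H 1) + cb (-1) (E i) (H 2)" for i
  have "c i = y i - y (succc n i)" if "1 \<le> i" "i \<le> n" for i
  proof -
    define S where "S = cb 0 (P i) (E i) + cb 0 (P i) (E (succc n i))"
    have c1: "c i = cb (-1) (E i) (H 1) - cb (-1) (E (succc n i)) (H 1) + S"
      using Mat_entry[OF e', of "-1" "P i" "H 1"] that unfolding S_def
      by (simp only: d_1_PH1[OF n that]) (simp add: admissible_def arr2_def)
    have c2: "0 = cb (-1) (E i) (H 2) - cb (-1) (E (succc n i)) (H 2) - S"
      using Mat_entry[OF e', of "-1" "P i" "H 2"] that unfolding S_def
      by (simp only: d_1_PH2[OF n that]) (simp add: admissible_def arr2_def)
    have "c i = (cb (-1) (E i) (H 1) - cb (-1) (E (succc n i)) (H 1) + S)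
        + (cb (-1) (E i) (H 2) - cb (-1) (E (succc n i)) (H 2) - S)" using c1 c2 by simp
    thus ?thesis unfolding y_def by (simp add: algebra_simps)
  qed
  hence "(\<Sum>i=1..n. c i) = (\<Sum>i=1..n. y i - y (succc n i))" by (intro sum.cong) auto
  also have "\<dots> = 0" by (rule cyclic_telescope) (use n in simp)
  finally show ?thesis .
qed

lemma EndJ_cycle_mod_U:
  assumes n: "2 \<le> n" and b: "b \<in> EndJ n p" and db: "dEnd n p b = zeroE"
  shows "\<exists>a\<in>Usub n p. dEnd n p a = zeroE \<and> (\<exists>c\<in>EndJ n (p - 1). subE b a = dEnd n (p - 1) c)"
proof -
  obtain cb where cb: "b = Mat n p cb" using EndJ_repr[OF b] by blast
  consider "p = 0" | "p = 1" | "p = 2" | "b = zeroE"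
    using cb db cycle_m1_zero[OF n] Mat_zero_deg by (cases "p = -1") auto
  thus ?thesis
  proof cases
    case 1
    let ?a = "u0 n (\<lambda>i. cb 0 (P i) (P i)) (cb (-1) (H 2) (H 2)) 0"
    obtain c where "subE b ?a = dEnd n (p - 1) (Mat n (p - 1) c)"
      using cycle0_mod_U[OF n] db cb 1 by auto
    moreover have "?a \<in> Usub n p" "dEnd n p ?a = zeroE"
      using 1 by (simp_all add: d_u0[OF n] zero_u1[symmetric])
    ultimately show ?thesis using Mat_in_EndJ by blast
  next
    case 2
    let ?a = "u1 n (\<lambda>i. cb 0 (P i) (P i)) (\<lambda>i. cb (-1) (P i) (H 1) + cb (-1) (P i) (H 2)) (\<lambda>_. 0)"
    obtain c where "subE b ?a = dEnd n (p - 1) (Mat n (p - 1) c)"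
      using cycle1_mod_U[OF n] db cb 2 by auto
    moreover have "?a \<in> Usub n p" "dEnd n p ?a = zeroE"
      using 2 by (simp_all add: d_u1[OF n] zero_u2[symmetric])
    ultimately show ?thesis using Mat_in_EndJ by blast
  next
    case 3
    let ?a = "u2 n (\<lambda>i. cb (-1) (P i) (H 1) + cb (-1) (P i) (H 2))"
    obtain c where "subE b ?a = dEnd n (p - 1) (Mat n (p - 1) c)"
      using deg2_mod_U[OF n] cb 3 by auto
    moreover have "?a \<in> Usub n p" "dEnd n p ?a = zeroE"
      using 3 by (simp_all add: d_u2)
    ultimately show ?thesis using Mat_in_EndJ by blast
  next
    case 4
    thus ?thesis using zero_Usub zero_EndJ by (metis dEnd_zero subE_self)
  qed
qed

lemma Usub_boundary_EndJ:
  assumes n: "2 \<le> n" and a: "a \<in> Usub n p" and da: "dEnd n p a = zeroE"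
    and b: "b \<in> EndJ n (p - 1)" and ab: "a = dEnd n (p - 1) b"
  shows "\<exists>b'\<in>Usub n (p - 1). a = dEnd n (p - 1) b'"
proof -
  obtain cb where cb: "b = Mat n (p - 1) cb" using EndJ_repr[OF b] by blast
  show ?thesis
    using a
  proof (cases rule: Usub_E)
    case (deg0 r s t)
    have "u1 n (\<lambda>_. 0) (\<lambda>_. 0) (\<lambda>_. t) = u1 n (\<lambda>_. 0) (\<lambda>_. 0) (\<lambda>_. 0)"
      using da deg0 by (simp add: d_u0[OF n] zero_u1[symmetric])
    from u1_coord[OF this, of n] have "t = 0" using n by simp
    hence "u0 n r s 0 = dEnd n (-1) (Mat n (-1) cb)" using ab deg0 cb by simp
    from bdry0_zero[OF n this] have "a = zeroE" using deg0 \<open>t = 0\<close> by simp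
    thus ?thesis using zero_is_boundary[OF zero_Usub] by simp
  next
    case (deg1 r u w)
    have cyc: "dEnd n 1 (u1 n r u w) = zeroE" using da deg1 by simp
    have bdry: "u1 n r u w = dEnd n 0 (Mat n 0 cb)" using ab deg1 cb by simp
    have "u1 n r u w = u1 n (\<lambda>_. 0) (\<lambda>_. 0) (\<lambda>_. w n)"
      unfolding u1_eq_iff using u1_cycle_const[OF n cyc] bdry1_coords[OF n bdry] by blast
    hence "a = dEnd n (p - 1) (u0 n (\<lambda>_. 0) 0 (w n))" using deg1 by (simp add: d_u0[OF n])
    moreover have "u0 n (\<lambda>_. 0) 0 (w n) \<in> Usub n (p - 1)" using deg1 by simp
    ultimately show ?thesis by blast
  next
    case (deg2 c)
    hence bdry: "u2 n c = dEnd n 1 (Mat n 1 cb)" using ab cb by simp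
    have "a = dEnd n (p - 1) (u1 n (\<lambda>_. 0) (\<lambda>_. 0) (\<lambda>i. \<Sum>m=i..<n. c m))"
      using u2_sum0_boundary[OF n bdry2_sum[OF n bdry]] deg2 by simp
    moreover have "u1 n (\<lambda>_. 0) (\<lambda>_. 0) (\<lambda>i. \<Sum>m=i..<n. c m) \<in> Usub n (p - 1)" using deg2 by simp
    ultimately show ?thesis by blast
  next
    case other
    thus ?thesis using zero_is_boundary[OF zero_Usub] by simp
  qed
qed

lemma qis_U_EndJ: "2 \<le> n \<Longrightarrow> qis n (Usub n) zeroG (EndJ n) zeroG"
  unfolding qis_def
proof (intro allI conjI ballI impI)
  fix p a
  assume n: "2 \<le> n" and "a \<in> qcycles n (Usub n) zeroG p" and "qbdry n (EndJ n) zeroG p a"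
  then obtain b where "a \<in> Usub n p" "dEnd n p a = zeroE" "b \<in> EndJ n (p - 1)" "a = dEnd n (p - 1) b"
    unfolding qcycles_def qbdry_def zeroG_def by auto
  from Usub_boundary_EndJ[OF n this] show "qbdry n (Usub n) zeroG p a"
    unfolding qbdry_def zeroG_def by auto
next
  fix p b
  assume n: "2 \<le> n" and "b \<in> qcycles n (EndJ n) zeroG p"
  hence "b \<in> EndJ n p" "dEnd n p b = zeroE" unfolding qcycles_def zeroG_def by auto
  from EndJ_cycle_mod_U[OF n this]
  show "\<exists>a\<in>qcycles n (Usub n) zeroG p. qbdry n (EndJ n) zeroG p (subE b a)"
    unfolding qcycles_def qbdry_def zeroG_def by auto
qed

text \<open>The chain End J \<hookleftarrow> U \<twoheadrightarrow> U/I \<hookleftarrow> V/I of quasi-isomorphisms, where V/I has zero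
  differential and is therefore its own cohomology.\<close>
theorem proposition5p8:
  fixes n :: nat
  assumes "is_pid TYPE('r::idom)"
    and "n \<ge> 2"
  shows "\<exists>(U :: int \<Rightarrow> 'r endo set) (I :: int \<Rightarrow> 'r endo set) (V :: int \<Rightarrow> 'r endo set).
           dg_subalg n U (EndJ n)
         \<and> dg_ideal n I U
         \<and> dg_subalg n V U \<and> (\<forall>p. I p \<subseteq> V p \<and> dEnd n p ` V p \<subseteq> I (p + 1))
         \<and> qis n U zeroG (EndJ n) zeroG
         \<and> qis n U zeroG U I
         \<and> qis n V I U I"
proof -
  have n: "2 \<le> n" using assms(2) by simp
  have "\<forall>p. Iideal n p \<subseteq> Vsub n p \<and> dEnd n p ` Vsub n p \<subseteq> (Iideal n (p + 1) :: 'r endo set)"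
    using Iideal_Vsub d_Vsub[OF n] by blast
  with Usub_subalg[OF n] Iideal_ideal[OF n] Vsub_subalg[OF n]
    qis_U_EndJ[OF n] qis_U_quotient[OF n] qis_V_quotient[OF n]
  show ?thesis by blast
qed

end
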